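(* Let $d\geq 1$ and let $\mathcal Z=G(d,2d)$ be the Grassmannian of $d$-dimensional subspaces of $\mathbb C^{2d}$. Let $U,V,W\in\mathcal Z$ be three points that are pairwise in general position, i.e. $U\cap V=U\cap W=V\cap W=0$ as subspaces of $\mathbb C^{2d}$. Then there is a unique morphism $f\colon\mathbb P^1\to\mathcal Z$ of degree $d$ such that $f(0)=U$, $f(1)=V$ and $f(\infty)=W$.
   Context: The degree of a morphism $f\colon\mathbb P^1\to G(k,n)$ is $\int f_*[\mathbb P^1]\cdot\sigma_1$, where $\sigma_1$ is the class of the Schubert divisor; equivalently it is the degree of the pullback of the tautological quotient bundle (minus the degree of the pullback of the tautological subbundle). Points of $\mathbb P^1$ are written in homogeneous coordinates $(s:t)$, with $0=(1:0)$, $1=(1:1)$, $\infty=(0:1)$. *)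

theory Defs
  imports Complex_Main "HOL-Combinatorics.Permutations"
begin

text \<open>Vectors of C^n are modelled as functions nat => complex vanishing at indices >= n.
  A point of G(d,n) is the column span of an n x d matrix of rank d (a frame).\<close>

type_synonym cvec = "nat \<Rightarrow> complex"
type_synonym cmat = "nat \<Rightarrow> nat \<Rightarrow> complex"

definition detn :: "nat \<Rightarrow> cmat \<Rightarrow> complex" where
  "detn d M = (\<Sum>p | p permutes {..<d}. of_int (sign p) * (\<Prod>k<d. M k (p k)))"

definition dsubsets :: "nat \<Rightarrow> nat \<Rightarrow> nat set set" where
  "dsubsets n d = {I. I \<subseteq> {..<n} \<and> card I = d}"

definition minor :: "nat \<Rightarrow> cmat \<Rightarrow> nat set \<Rightarrow> complex" where
  "minor d A I = detn d (\<lambda>k j. A (sorted_list_of_set I ! k) j)"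

definition colspan :: "nat \<Rightarrow> cmat \<Rightarrow> cvec set" where
  "colspan d A = {v. \<exists>c :: nat \<Rightarrow> complex. \<forall>i. v i = (\<Sum>j<d. A i j * c j)}"

definition frame :: "nat \<Rightarrow> nat \<Rightarrow> cmat \<Rightarrow> bool" where
  "frame n d A \<longleftrightarrow> (\<forall>i j. (n \<le> i \<or> d \<le> j) \<longrightarrow> A i j = 0)
                   \<and> (\<exists>I\<in>dsubsets n d. minor d A I \<noteq> 0)"

definition grass_point :: "nat \<Rightarrow> nat \<Rightarrow> cvec set \<Rightarrow> bool" where
  "grass_point n d S \<longleftrightarrow> (\<exists>A. frame n d A \<and> S = colspan d A)"

definition hform :: "nat \<Rightarrow> (nat \<Rightarrow> complex) \<Rightarrow> complex \<Rightarrow> complex \<Rightarrow> complex" where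
  "hform e c s t = (\<Sum>i\<le>e. c i * s ^ i * t ^ (e - i))"

text \<open>f : P^1 -> G(d,n) (points of P^1 given by homogeneous coordinates (s,t) \<noteq> (0,0))
  is a morphism of degree e: its composite with the Pluecker embedding is given by
  binary forms of degree e without common zero.\<close>
definition grass_morphism :: "nat \<Rightarrow> nat \<Rightarrow> nat \<Rightarrow> (complex \<times> complex \<Rightarrow> cvec set) \<Rightarrow> bool" where
  "grass_morphism n d e f \<longleftrightarrow>
     (\<exists>P :: nat set \<Rightarrow> nat \<Rightarrow> complex.
        \<forall>s t. (s, t) \<noteq> (0, 0) \<longrightarrow>
          (\<exists>I\<in>dsubsets n d. hform e (P I) s t \<noteq> 0) \<and>
          (\<exists>A. frame n d A \<and> f (s, t) = colspan d A \<and>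
             (\<exists>c. c \<noteq> 0 \<and> (\<forall>I\<in>dsubsets n d. minor d A I = c * hform e (P I) s t))))"

end

theory Submission
  imports Defs "Jordan_Normal_Form.Determinant"
begin

text \<open>Choose frames \<open>MU\<close>, \<open>MW\<close> of \<open>U\<close>, \<open>W\<close> such that \<open>MU + MW\<close> spans \<open>V\<close>; transversality makes
  \<open>[MU | MW]\<close> invertible, and in the basis given by its columns \<open>U\<close>, \<open>W\<close>, \<open>V\<close> become the spans of
  \<open>[I; 0]\<close>, \<open>[0; I]\<close>, \<open>[I; I]\<close>. Then \<open>(s : t) \<mapsto> span (s MU + t MW)\<close> is a morphism of degree \<open>d\<close>
  through the three points.

  For uniqueness write a frame of \<open>f (s : t)\<close> in these coordinates as \<open>[X; Y]\<close>. All its minors are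
  \<open>c(s,t)\<close> times binary forms of degree \<open>d\<close>, in particular \<open>det X\<close>, \<open>det Y\<close> and the entries of
  \<open>Y adj X\<close> and \<open>X adj Y\<close>. On the chart \<open>s = 1\<close>: since \<open>X (0:1) = 0\<close> the entries of \<open>X adj Y\<close> have
  degree \<open>< d\<close>, while \<open>det Y\<close> has degree \<open>d\<close>, so \<open>det (X adj Y) = det X det Y\<^sup>d\<^sup>-\<^sup>1\<close> forces \<open>det X\<close>
  to be a constant \<open>\<alpha>\<close>. Since \<open>Y (1:0) = 0\<close>, \<open>Y adj X = z G(z)\<close>, and \<open>det (Y adj X) = \<alpha>\<^sup>d\<^sup>-\<^sup>1 det Y\<close>
  forces \<open>det G\<close> constant and \<open>det Y = \<beta> z\<^sup>d\<close>. Then \<open>(X adj Y) G = \<alpha> \<beta> z\<^sup>d\<^sup>-\<^sup>1\<close> and the degree bound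
  on \<open>X adj Y\<close> make \<open>G\<close> constant, and the point \<open>(1:1)\<close> gives \<open>G = \<alpha> I\<close>. Hence \<open>Y = z X\<close>: the
  frame is \<open>[sT; tT]\<close>, i.e. \<open>f\<close> is the morphism above.\<close>

section \<open>Frames as matrices\<close>

definition mat_of_cmat :: "nat \<Rightarrow> nat \<Rightarrow> cmat \<Rightarrow> complex mat" where
  "mat_of_cmat r c A = mat r c (\<lambda>(i, j). A i j)"

definition cmat_of_mat :: "complex mat \<Rightarrow> cmat" where
  "cmat_of_mat M = (\<lambda>i j. if i < dim_row M \<and> j < dim_col M then M $$ (i, j) else 0)"

definition cvec_of_vec :: "complex vec \<Rightarrow> cvec" where
  "cvec_of_vec v = (\<lambda>i. if i < dim_vec v then v $ i else 0)"

definition col_space :: "complex mat \<Rightarrow> cvec set" where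
  "col_space M = {cvec_of_vec (M *\<^sub>v w) | w. w \<in> carrier_vec (dim_col M)}"

definition rows_select :: "nat \<Rightarrow> nat \<Rightarrow> (nat \<Rightarrow> nat) \<Rightarrow> complex mat" where
  "rows_select d n \<sigma> = mat d n (\<lambda>(i, k). if k = \<sigma> i then 1 else 0)"

definition pluecker_coord :: "nat \<Rightarrow> nat set \<Rightarrow> complex mat \<Rightarrow> complex" where
  "pluecker_coord d I M = det (rows_select d (dim_row M) ((!) (sorted_list_of_set I)) * M)"

definition mat_frame :: "nat \<Rightarrow> nat \<Rightarrow> complex mat \<Rightarrow> bool" where
  "mat_frame n d M \<longleftrightarrow> M \<in> carrier_mat n d \<and> (\<exists>I\<in>dsubsets n d. pluecker_coord d I M \<noteq> 0)"

lemma mat_of_cmat_carrier [simp]: "mat_of_cmat r c A \<in> carrier_mat r c"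
  and dim_mat_of_cmat [simp]: "dim_row (mat_of_cmat r c A) = r" "dim_col (mat_of_cmat r c A) = c"
  and index_mat_of_cmat [simp]: "i < r \<Longrightarrow> j < c \<Longrightarrow> mat_of_cmat r c A $$ (i, j) = A i j"
  by (auto simp: mat_of_cmat_def)

lemma mat_of_cmat_of_mat [simp]: "M \<in> carrier_mat r c \<Longrightarrow> mat_of_cmat r c (cmat_of_mat M) = M"
  by (auto simp: cmat_of_mat_def intro!: eq_matI)

lemma cmat_of_mat_of_cmat:
  assumes "\<And>i j. r \<le> i \<or> c \<le> j \<Longrightarrow> A i j = 0"
  shows "cmat_of_mat (mat_of_cmat r c A) = A"
  using assms by (fastforce simp: cmat_of_mat_def not_less)

lemma rows_select_carrier [simp]: "rows_select d n \<sigma> \<in> carrier_mat d n"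
  and dim_rows_select [simp]: "dim_row (rows_select d n \<sigma>) = d" "dim_col (rows_select d n \<sigma>) = n"
  by (simp_all add: rows_select_def)

lemma rows_select_mult:
  assumes K: "K \<in> carrier_mat n m" and \<sigma>: "\<And>i. i < d \<Longrightarrow> \<sigma> i < n"
  shows "rows_select d n \<sigma> * K = mat d m (\<lambda>(i, j). K $$ (\<sigma> i, j))"
proof (rule eq_matI)
  fix i j assume "i < dim_row (mat d m (\<lambda>(i, j). K $$ (\<sigma> i, j)))"
    "j < dim_col (mat d m (\<lambda>(i, j). K $$ (\<sigma> i, j)))"
  then have ij: "i < d" "j < m" by auto
  then have "(rows_select d n \<sigma> * K) $$ (i, j) = (\<Sum>k<n. (if k = \<sigma> i then 1 else 0) * K $$ (k, j))"
    using K by (auto simp: rows_select_def scalar_prod_def atLeast0LessThan intro!: sum.cong)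
  also have "\<dots> = (\<Sum>k<n. if k = \<sigma> i then K $$ (k, j) else 0)"
    by (rule sum.cong) auto
  finally show "(rows_select d n \<sigma> * K) $$ (i, j) = mat d m (\<lambda>(i, j). K $$ (\<sigma> i, j)) $$ (i, j)"
    using ij \<sigma>[of i] by simp
qed (use K in \<open>auto simp: rows_select_def\<close>)

lemma rows_select_mult_carrier [simp]: "K \<in> carrier_mat n m \<Longrightarrow> rows_select d n \<sigma> * K \<in> carrier_mat d m"
  by (rule mult_carrier_mat[OF rows_select_carrier])

lemma finite_dsubsets [simp]: "finite (dsubsets n d)"
  unfolding dsubsets_def by (rule finite_subset[of _ "Pow {..<n}"]) auto

lemma dsubset_nth_less:
  assumes "I \<in> dsubsets n d" "k < d"
  shows "sorted_list_of_set I ! k < n"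
proof -
  have "finite I" "card I = d" "I \<subseteq> {..<n}"
    using assms(1) by (auto simp: dsubsets_def intro: finite_subset)
  then show ?thesis
    using assms(2) by (metis length_sorted_list_of_set lessThan_iff nth_mem set_sorted_list_of_set subsetD)
qed

lemma minor_eq_pluecker_coord:
  assumes "I \<in> dsubsets n d"
  shows "minor d A I = pluecker_coord d I (mat_of_cmat n d A)"
proof -
  have "rows_select d n ((!) (sorted_list_of_set I)) * mat_of_cmat n d A
      = mat d d (\<lambda>(k, j). A (sorted_list_of_set I ! k) j)"
    by (subst rows_select_mult) (auto simp: dsubset_nth_less[OF assms] intro!: eq_matI)
  then show ?thesis
    unfolding minor_def pluecker_coord_def detn_def det_def
    by (auto simp: atLeast0LessThan intro!: sum.cong prod.cong)
qed

lemma pluecker_coord_mult: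
  assumes "M \<in> carrier_mat n d" "T \<in> carrier_mat d d"
  shows "pluecker_coord d I (M * T) = pluecker_coord d I M * det T"
proof -
  let ?S = "rows_select d n ((!) (sorted_list_of_set I))"
  have "?S * (M * T) = ?S * M * T"
    using assms by (simp add: assoc_mult_mat[of ?S d n M d T d])
  then show ?thesis
    unfolding pluecker_coord_def using assms
    by (simp add: det_mult[OF mult_carrier_mat[OF rows_select_carrier assms(1)] assms(2)])
qed

lemma frame_iff_mat_frame:
  assumes "\<And>i j. n \<le> i \<or> d \<le> j \<Longrightarrow> A i j = 0"
  shows "frame n d A \<longleftrightarrow> mat_frame n d (mat_of_cmat n d A)"
  using assms by (auto simp: frame_def mat_frame_def minor_eq_pluecker_coord)

lemma frame_cmat_of_mat:
  assumes "mat_frame n d M"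
  shows "frame n d (cmat_of_mat M)"
proof -
  have M: "M \<in> carrier_mat n d" using assms by (simp add: mat_frame_def)
  have "cmat_of_mat M i j = 0" if "n \<le> i \<or> d \<le> j" for i j
    using M that by (auto simp: cmat_of_mat_def)
  then show ?thesis
    using assms M by (simp add: frame_iff_mat_frame)
qed

lemma cvec_of_mult_vec:
  assumes "M \<in> carrier_mat n d" "w \<in> carrier_vec d"
  shows "cvec_of_vec (M *\<^sub>v w) i = (\<Sum>j<d. cmat_of_mat M i j * w $ j)"
  using assms by (auto simp: cvec_of_vec_def cmat_of_mat_def scalar_prod_def atLeast0LessThan)

lemma colspan_cmat_of_mat:
  assumes M: "M \<in> carrier_mat n d"
  shows "colspan d (cmat_of_mat M) = col_space M"
proof
  show "colspan d (cmat_of_mat M) \<subseteq> col_space M"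
  proof
    fix v assume "v \<in> colspan d (cmat_of_mat M)"
    then obtain c where "\<And>i. v i = (\<Sum>j<d. cmat_of_mat M i j * c j)"
      unfolding colspan_def by blast
    then have "v = cvec_of_vec (M *\<^sub>v vec d c)"
      using cvec_of_mult_vec[OF M, of "vec d c"] by auto
    then show "v \<in> col_space M"
      using M unfolding col_space_def by auto
  qed
  show "col_space M \<subseteq> colspan d (cmat_of_mat M)"
    using M cvec_of_mult_vec[OF M] unfolding col_space_def colspan_def by auto
qed

lemma colspan_eq_col_space:
  assumes "frame n d A"
  shows "colspan d A = col_space (mat_of_cmat n d A)"
proof -
  have "cmat_of_mat (mat_of_cmat n d A) = A"
    by (rule cmat_of_mat_of_cmat) (use assms in \<open>auto simp: frame_def\<close>)
  then show ?thesis
    using colspan_cmat_of_mat[OF mat_of_cmat_carrier, of d n A] by simp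
qed

lemma cvec_of_vec_inj:
  assumes "u \<in> carrier_vec n" "v \<in> carrier_vec n" "cvec_of_vec u = cvec_of_vec v"
  shows "u = v"
proof (rule eq_vecI)
  fix i assume "i < dim_vec v"
  moreover have "cvec_of_vec u i = cvec_of_vec v i" using assms(3) by simp
  ultimately show "u $ i = v $ i"
    using assms(1,2) by (simp add: cvec_of_vec_def)
qed (use assms in auto)

lemma cvec_of_zero_vec [simp]: "cvec_of_vec (0\<^sub>v n) = (\<lambda>_. 0)"
  by (auto simp: cvec_of_vec_def)

lemma inverse_mat_exists:
  fixes A :: "complex mat"
  assumes "A \<in> carrier_mat n n" "det A \<noteq> 0"
  obtains B where "B \<in> carrier_mat n n" "A * B = 1\<^sub>m n" "B * A = 1\<^sub>m n"
  using det_non_zero_imp_unit[OF assms, of undefined] unfolding Units_def ring_mat_def by auto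

lemma det_rows_inj_eq_signed_pluecker_coord:
  assumes f: "f ` {0..<d} \<subseteq> {0..<n}" and inj: "inj_on f {0..<d}"
  shows "\<exists>p. p permutes {0..<d} \<and> (\<forall>M\<in>carrier_mat n d.
           det (mat\<^sub>r d d (\<lambda>i. row M (f i))) = signof p * pluecker_coord d (f ` {0..<d}) M)"
proof -
  define I where "I = f ` {0..<d}"
  define xs where "xs = sorted_list_of_set I"
  have card_I: "card I = d" using inj card_image unfolding I_def by fastforce
  have I: "I \<in> dsubsets n d" using f card_I by (auto simp: I_def dsubsets_def)
  have "length xs = d" "set xs = I" "distinct xs"
    using card_I by (simp_all add: xs_def I_def)
  then have bij_xs: "bij_betw ((!) xs) {0..<d} I"
    by (intro bij_betw_nth) auto
  have bij_f: "bij_betw f {0..<d} I" using inj unfolding I_def by (simp add: bij_betw_def)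
  define p where "p i = (if i < d then inv_into {0..<d} ((!) xs) (f i) else i)" for i
  have "bij_betw (inv_into {0..<d} ((!) xs) \<circ> f) {0..<d} {0..<d}"
    using bij_betw_trans[OF bij_f bij_betw_inv_into[OF bij_xs]] by simp
  then have "bij_betw p {0..<d} {0..<d}"
    by (rule bij_betw_cong[THEN iffD1, rotated]) (auto simp: p_def)
  then have p: "p permutes {0..<d}"
    by (rule bij_imp_permutes) (simp add: p_def)
  have xs_p: "xs ! p i = f i" if "i < d" for i
    using that bij_xs f_inv_into_f[of "f i" "(!) xs" "{0..<d}"]
    by (auto simp: p_def I_def bij_betw_def)
  have "det (mat\<^sub>r d d (\<lambda>i. row M (f i))) = signof p * pluecker_coord d I M"
    if M: "M \<in> carrier_mat n d" for M
  proof -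
    define S where "S = rows_select d n ((!) xs) * M"
    have S: "S = mat d d (\<lambda>(k, j). M $$ (xs ! k, j))"
      unfolding S_def xs_def using M by (subst rows_select_mult) (auto simp: dsubset_nth_less[OF I])
    have "mat\<^sub>r d d (\<lambda>i. row M (f i)) = mat d d (\<lambda>(i, j). S $$ (p i, j))"
      using M f xs_p permutes_in_image[OF p] by (auto simp: S image_subset_iff intro!: eq_matI)
    moreover have "S \<in> carrier_mat d d" using M by (simp add: S_def)
    ultimately show ?thesis
      using det_permute_rows[OF _ p, of S] M by (simp add: S_def pluecker_coord_def xs_def)
  qed
  then show ?thesis using p unfolding I_def by blast
qed

lemma det_rows_eq_multiple_of_pluecker_coord:
  assumes f: "f ` {0..<d} \<subseteq> {0..<n}" and dn: "d \<le> n"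
  shows "\<exists>I\<in>dsubsets n d. \<exists>e. \<forall>M\<in>carrier_mat n d.
           det (mat\<^sub>r d d (\<lambda>i. row M (f i))) = e * pluecker_coord d I M"
proof (cases "inj_on f {0..<d}")
  case True
  then have "f ` {0..<d} \<in> dsubsets n d"
    using f card_image[OF True] by (auto simp: dsubsets_def)
  then show ?thesis
    using det_rows_inj_eq_signed_pluecker_coord[OF f True] by blast
next
  case False
  then obtain i j where ij: "i < d" "j < d" "i \<noteq> j" "f i = f j" unfolding inj_on_def by auto
  have "det (mat\<^sub>r d d (\<lambda>i. row M (f i))) = 0" for M
    by (rule det_identical_rows[OF mat_row_carrierI ij(3,1,2)]) (use ij in \<open>auto intro!: eq_vecI\<close>)
  moreover have "{0..<d} \<in> dsubsets n d" using dn by (auto simp: dsubsets_def)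
  ultimately show ?thesis by (metis mult_zero_left)
qed

theorem cauchy_binet_lincomb:
  assumes L: "L \<in> carrier_mat d n" and dn: "d \<le> n"
  shows "\<exists>lam. \<forall>M\<in>carrier_mat n d. det (L * M) = (\<Sum>I\<in>dsubsets n d. lam I * pluecker_coord d I M)"
proof -
  define F where "F = {f. (\<forall>i\<in>{0..<d}. f i \<in> {0..<n}) \<and> (\<forall>i. i \<notin> {0..<d} \<longrightarrow> f i = i)}"
  have "finite F" unfolding F_def by (rule finite_bounded_functions) auto
  obtain J e where J: "\<And>f. f \<in> F \<Longrightarrow> J f \<in> dsubsets n d"
    and e: "\<And>f M. f \<in> F \<Longrightarrow> M \<in> carrier_mat n d \<Longrightarrow>
              det (mat\<^sub>r d d (\<lambda>i. row M (f i))) = e f * pluecker_coord d (J f) M"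
  proof -
    have "\<forall>f\<in>F. \<exists>I\<in>dsubsets n d. \<exists>e. \<forall>M\<in>carrier_mat n d.
        det (mat\<^sub>r d d (\<lambda>i. row M (f i))) = e * pluecker_coord d I M"
      using det_rows_eq_multiple_of_pluecker_coord[OF _ dn] unfolding F_def
      by (simp add: image_subset_iff)
    then show ?thesis using that by metis
  qed
  define w where "w f = (\<Prod>i\<in>{0..<d}. L $$ (i, f i)) * e f" for f
  define lam where "lam I = (\<Sum>f\<in>{f \<in> F. J f = I}. w f)" for I
  have "det (L * M) = (\<Sum>I\<in>dsubsets n d. lam I * pluecker_coord d I M)" if M: "M \<in> carrier_mat n d" for M
  proof -
    have "det (L * M) = det (mat\<^sub>r d d (\<lambda>i. finsum_vec TYPE(complex) d (\<lambda>k. L $$ (i, k) \<cdot>\<^sub>v row M k) {0..<n}))"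
      using mat_mul_finsum_alt[OF L M] by simp
    also have "\<dots> = (\<Sum>f\<in>F. det (mat\<^sub>r d d (\<lambda>i. L $$ (i, f i) \<cdot>\<^sub>v row M (f i))))"
      unfolding F_def by (rule det_linear_rows_sum) (use M in auto)
    also have "\<dots> = (\<Sum>f\<in>F. w f * pluecker_coord d (J f) M)"
      by (rule sum.cong[OF refl], subst det_rows_mul) (use M in \<open>auto simp: F_def w_def e\<close>)
    also have "\<dots> = (\<Sum>I\<in>dsubsets n d. \<Sum>f\<in>{f \<in> F. J f = I}. w f * pluecker_coord d (J f) M)"
      by (rule sum.group[symmetric]) (use \<open>finite F\<close> J in auto)
    also have "\<dots> = (\<Sum>I\<in>dsubsets n d. lam I * pluecker_coord d I M)"
      unfolding lam_def sum_distrib_right by (auto intro!: sum.cong)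
    finally show ?thesis .
  qed
  then show ?thesis by blast
qed

lemma mat_frame_carrier: "mat_frame n d M \<Longrightarrow> M \<in> carrier_mat n d"
  by (simp add: mat_frame_def)

lemma mat_frameI_det_mult:
  assumes "M \<in> carrier_mat n d" "L \<in> carrier_mat d n" "d \<le> n" "det (L * M) \<noteq> 0"
  shows "mat_frame n d M"
proof -
  obtain lam where "det (L * M) = (\<Sum>I\<in>dsubsets n d. lam I * pluecker_coord d I M)"
    using cauchy_binet_lincomb[OF assms(2,3)] assms(1) by blast
  then have "\<exists>I\<in>dsubsets n d. pluecker_coord d I M \<noteq> 0"
    using assms(4) by (metis (no_types, lifting) mult_zero_right sum.neutral)
  then show ?thesis using assms(1) by (simp add: mat_frame_def)
qed

lemma mat_frame_mult:
  assumes "mat_frame n d M" "T \<in> carrier_mat d d" "det T \<noteq> 0"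
  shows "mat_frame n d (M * T)"
  using assms pluecker_coord_mult[OF mat_frame_carrier[OF assms(1)] assms(2)]
  by (auto simp: mat_frame_def)

lemma mat_frame_mult_vec_eq_0:
  assumes M: "mat_frame n d M" and v: "v \<in> carrier_vec d" and Mv: "M *\<^sub>v v = 0\<^sub>v n"
  shows "v = 0\<^sub>v d"
proof -
  obtain I where "pluecker_coord d I M \<noteq> 0"
    using M by (auto simp: mat_frame_def)
  moreover define S where "S = rows_select d n ((!) (sorted_list_of_set I))"
  have "M \<in> carrier_mat n d" using M by (simp add: mat_frame_def)
  ultimately have SM: "det (S * M) \<noteq> 0" "S * M \<in> carrier_mat d d"
    by (simp_all add: pluecker_coord_def S_def)
  have "(S * M) *\<^sub>v v = S *\<^sub>v (M *\<^sub>v v)"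
    unfolding S_def by (rule assoc_mult_mat_vec[OF rows_select_carrier \<open>M \<in> carrier_mat n d\<close> v])
  also have "\<dots> = 0\<^sub>v d"
    unfolding Mv S_def by (intro eq_vecI) auto
  finally have "(S * M) *\<^sub>v v = 0\<^sub>v d" .
  then show ?thesis
    using SM(1) v by (subst (asm) det_0_iff_vec_prod_zero[OF SM(2)]) blast
qed

lemma col_space_mult_subset:
  assumes "M \<in> carrier_mat n d" "T \<in> carrier_mat d d"
  shows "col_space (M * T) \<subseteq> col_space M"
proof
  fix v assume "v \<in> col_space (M * T)"
  then obtain w where "w \<in> carrier_vec d" "v = cvec_of_vec (M * T *\<^sub>v w)"
    using assms unfolding col_space_def by auto
  then show "v \<in> col_space M"
    using assms unfolding col_space_def by (auto intro!: exI[of _ "T *\<^sub>v w"])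
qed

lemma col_space_mult_invertible:
  assumes M: "M \<in> carrier_mat n d" and T: "T \<in> carrier_mat d d" "det T \<noteq> 0"
  shows "col_space (M * T) = col_space M"
proof
  show "col_space (M * T) \<subseteq> col_space M" by (rule col_space_mult_subset[OF M T(1)])
  obtain T' where T': "T' \<in> carrier_mat d d" "T * T' = 1\<^sub>m d"
    using inverse_mat_exists[OF T] by blast
  have "M = M * T * T'"
    using M T T' by (simp add: assoc_mult_mat[of M n d T d T' d])
  then show "col_space M \<subseteq> col_space (M * T)"
    using col_space_mult_subset[OF mult_carrier_mat[OF M T(1)] T'(1)] by simp
qed

lemma col_space_subset_imp_mult:
  assumes M: "M \<in> carrier_mat n d" and N: "N \<in> carrier_mat n d"
    and sub: "col_space M \<subseteq> col_space N"
  shows "\<exists>T\<in>carrier_mat d d. M = N * T"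
proof -
  have "\<exists>w\<in>carrier_vec d. col M j = N *\<^sub>v w" if "j < d" for j
  proof -
    have "cvec_of_vec (M *\<^sub>v unit_vec d j) \<in> col_space M"
      using M unfolding col_space_def by auto
    then have "cvec_of_vec (M *\<^sub>v unit_vec d j) \<in> col_space N"
      using sub by blast
    then obtain w where w: "w \<in> carrier_vec d" "cvec_of_vec (M *\<^sub>v unit_vec d j) = cvec_of_vec (N *\<^sub>v w)"
      using N unfolding col_space_def by auto
    have "M *\<^sub>v unit_vec d j = col M j"
      using M that by (intro eq_vecI) auto
    moreover have "M *\<^sub>v unit_vec d j = N *\<^sub>v w"
      by (rule cvec_of_vec_inj[OF _ _ w(2), where n = n]) (use M N w(1) in auto)
    ultimately show ?thesis using w(1) by metis
  qed
  then obtain W where W: "\<And>j. j < d \<Longrightarrow> W j \<in> carrier_vec d \<and> col M j = N *\<^sub>v W j"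
    by metis
  define T where "T = mat d d (\<lambda>(k, j). W j $ k)"
  have "M = N * T"
  proof (rule eq_matI)
    fix i j assume "i < dim_row (N * T)" "j < dim_col (N * T)"
    then have ij: "i < n" "j < d" using N by (auto simp: T_def)
    have Wj: "W j \<in> carrier_vec d" "col M j = N *\<^sub>v W j" using W[OF ij(2)] by auto
    have "col T j = W j"
      using carrier_vecD[OF Wj(1)] ij by (intro eq_vecI) (simp_all add: T_def)
    then have "(N * T) $$ (i, j) = (N *\<^sub>v W j) $ i"
      using ij N by (simp add: T_def)
    also have "\<dots> = col M j $ i" by (simp add: Wj(2))
    also have "\<dots> = M $$ (i, j)" using ij M by simp
    finally show "M $$ (i, j) = (N * T) $$ (i, j)" ..
  qed (use M N in \<open>simp_all add: T_def\<close>)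
  moreover have "T \<in> carrier_mat d d" by (simp add: T_def)
  ultimately show ?thesis by blast
qed

lemma transversal_frames_mult_vec:
  assumes M: "mat_frame n d M" and N: "N \<in> carrier_mat n d"
    and MN: "col_space M \<inter> col_space N = {\<lambda>_. 0}"
    and v: "v \<in> carrier_vec d" and w: "w \<in> carrier_vec d" and eq: "M *\<^sub>v v = N *\<^sub>v w"
  shows "v = 0\<^sub>v d"
proof -
  have Mc: "M \<in> carrier_mat n d" using M by (rule mat_frame_carrier)
  have "cvec_of_vec (M *\<^sub>v v) \<in> col_space M" "cvec_of_vec (N *\<^sub>v w) \<in> col_space N"
    using Mc N v w unfolding col_space_def by auto
  then have "cvec_of_vec (M *\<^sub>v v) \<in> col_space M \<inter> col_space N"
    unfolding eq by blast
  then have "cvec_of_vec (M *\<^sub>v v) = cvec_of_vec (0\<^sub>v n)" using MN by simp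
  then have "M *\<^sub>v v = 0\<^sub>v n"
    by (rule cvec_of_vec_inj[rotated 2, where n = n]) (use Mc v in auto)
  then show ?thesis by (rule mat_frame_mult_vec_eq_0[OF M v])
qed

section \<open>Block matrices\<close>

definition append_cols :: "'a :: zero mat \<Rightarrow> 'a mat \<Rightarrow> 'a mat" where
  "append_cols A B = four_block_mat A B (0\<^sub>m 0 (dim_col A)) (0\<^sub>m 0 (dim_col B))"

definition upper_block :: "nat \<Rightarrow> 'a mat \<Rightarrow> 'a mat" where
  "upper_block k K = mat k (dim_col K) (\<lambda>(i, j). K $$ (i, j))"

definition lower_block :: "nat \<Rightarrow> 'a mat \<Rightarrow> 'a mat" where
  "lower_block k K = mat (dim_row K - k) (dim_col K) (\<lambda>(i, j). K $$ (k + i, j))"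

lemma index_append_rows:
  assumes "A \<in> carrier_mat m k" "B \<in> carrier_mat m' k" "i < m + m'" "j < k"
  shows "(A @\<^sub>r B) $$ (i, j) = (if i < m then A $$ (i, j) else B $$ (i - m, j))"
  using assms by (auto simp: append_rows_def)

lemma append_rows_carrier_double:
  "A \<in> carrier_mat d k \<Longrightarrow> B \<in> carrier_mat d k \<Longrightarrow> A @\<^sub>r B \<in> carrier_mat (2 * d) k"
  using carrier_append_rows[of A d k B d] by (simp add: mult_2)

lemma dim_append_cols [simp]:
  "dim_row (append_cols A B) = dim_row A" "dim_col (append_cols A B) = dim_col A + dim_col B"
  unfolding append_cols_def by (simp_all only: index_mat_four_block(2,3) index_zero_mat add_0_right)

lemma dim_append_rows [simp]:
  "dim_row (A @\<^sub>r B) = dim_row A + dim_row B" "dim_col (A @\<^sub>r B) = dim_col A"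
  unfolding append_rows_def by (simp_all only: index_mat_four_block(2,3) index_zero_mat add_0_right)

lemma append_cols_carrier [simp]:
  "A \<in> carrier_mat n k \<Longrightarrow> B \<in> carrier_mat n l \<Longrightarrow> append_cols A B \<in> carrier_mat n (k + l)"
  by (intro carrier_matI) (simp_all only: dim_append_cols carrier_matD)

lemma row_append_cols:
  assumes "A \<in> carrier_mat n k" "B \<in> carrier_mat n l" "i < n"
  shows "row (append_cols A B) i = row A i @\<^sub>v row B i"
proof -
  have "append_cols A B = four_block_mat A B (0\<^sub>m 0 k) (0\<^sub>m 0 l)"
    unfolding append_cols_def carrier_matD(2)[OF assms(1)] carrier_matD(2)[OF assms(2)] ..
  then show ?thesis
    using row_four_block_mat(1)[of A n k B l "0\<^sub>m 0 k" 0 "0\<^sub>m 0 l"] assms by simp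
qed

lemma append_cols_mult_vec:
  assumes A: "A \<in> carrier_mat n k" and B: "B \<in> carrier_mat n l"
    and v: "v \<in> carrier_vec k" and w: "w \<in> carrier_vec l"
  shows "append_cols A B *\<^sub>v (v @\<^sub>v w) = A *\<^sub>v v + B *\<^sub>v w"
  using assms by (intro eq_vecI) (auto simp: row_append_cols scalar_prod_append[of _ k _ l])

lemma append_cols_mult_append_rows:
  assumes A: "A \<in> carrier_mat n k" and B: "B \<in> carrier_mat n l"
    and X: "X \<in> carrier_mat k m" and Y: "Y \<in> carrier_mat l m"
  shows "append_cols A B * (X @\<^sub>r Y) = A * X + B * Y"
proof (rule eq_matI)
  fix i j assume "i < dim_row (A * X + B * Y)" "j < dim_col (A * X + B * Y)"
  then have ij: "i < n" "j < m" using A B Y by auto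
  have "col (X @\<^sub>r Y) j = col X j @\<^sub>v col Y j"
    using col_four_block_mat(1)[of X k m "0\<^sub>m k 0" 0 Y l "0\<^sub>m l 0"] X Y ij by (simp add: append_rows_def)
  then show "(append_cols A B * (X @\<^sub>r Y)) $$ (i, j) = (A * X + B * Y) $$ (i, j)"
    using assms ij by (simp add: row_append_cols scalar_prod_append[of _ k _ l])
qed (use assms in simp_all)

lemma append_rows_mult:
  assumes A: "A \<in> carrier_mat k n" and B: "B \<in> carrier_mat l n" and T: "T \<in> carrier_mat n m"
  shows "(A @\<^sub>r B) * T = (A * T) @\<^sub>r (B * T)"
proof (rule eq_matI)
  fix i j assume "i < dim_row ((A * T) @\<^sub>r (B * T))" "j < dim_col ((A * T) @\<^sub>r (B * T))"
  then have ij: "i < k + l" "j < m" using assms by auto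
  have "row (A @\<^sub>r B) i = (if i < k then row A i else row B (i - k))"
    using row_four_block_mat[of A k n "0\<^sub>m k 0" 0 B l "0\<^sub>m l 0"] assms ij by (auto simp: append_rows_def)
  then show "((A @\<^sub>r B) * T) $$ (i, j) = ((A * T) @\<^sub>r (B * T)) $$ (i, j)"
    using assms ij by (simp add: index_append_rows[of _ k m _ l])
qed (use assms in auto)

lemma upper_lower_block_append_rows:
  assumes "A \<in> carrier_mat k m" "B \<in> carrier_mat l m"
  shows "upper_block k (A @\<^sub>r B) = A" "lower_block k (A @\<^sub>r B) = B"
  using assms by (auto simp: upper_block_def lower_block_def index_append_rows intro!: eq_matI)

lemma append_rows_upper_lower_block:
  assumes "K \<in> carrier_mat (k + l) m"
  shows "upper_block k K @\<^sub>r lower_block k K = K"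
  using assms by (auto simp: upper_block_def lower_block_def index_append_rows[of _ k m _ l] intro!: eq_matI)

lemma upper_lower_block_carrier:
  "K \<in> carrier_mat (k + l) m \<Longrightarrow> upper_block k K \<in> carrier_mat k m"
  "K \<in> carrier_mat (k + l) m \<Longrightarrow> lower_block k K \<in> carrier_mat l m"
  by (auto simp: upper_block_def lower_block_def)

lemma det_nonzero_if_injective:
  fixes M :: "complex mat"
  assumes "M \<in> carrier_mat n n" "\<And>v. v \<in> carrier_vec n \<Longrightarrow> M *\<^sub>v v = 0\<^sub>v n \<Longrightarrow> v = 0\<^sub>v n"
  shows "det M \<noteq> 0"
proof
  assume "det M = 0"
  then obtain v where "v \<in> carrier_vec n" "v \<noteq> 0\<^sub>v n" "M *\<^sub>v v = 0\<^sub>v n"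
    unfolding det_0_iff_vec_prod_zero[OF assms(1)] by blast
  then show False using assms(2) by blast
qed

section \<open>Binary forms\<close>

definition binary_form :: "nat \<Rightarrow> (complex \<Rightarrow> complex \<Rightarrow> complex) \<Rightarrow> bool" where
  "binary_form e F \<longleftrightarrow> (\<exists>c. \<forall>s t. F s t = hform e c s t)"

lemma hform_sum_coeffs:
  "hform e (\<lambda>i. \<Sum>x\<in>S. w x * c x i) s t = (\<Sum>x\<in>S. w x * hform e (c x) s t)"
  unfolding hform_def sum_distrib_left sum_distrib_right
  by (subst sum.swap) (simp add: mult.assoc)

lemma binary_form_sum:
  assumes "\<And>x. x \<in> S \<Longrightarrow> binary_form e (F x)"
  shows "binary_form e (\<lambda>s t. \<Sum>x\<in>S. w x * F x s t)"
proof -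
  obtain c where c: "\<And>x s t. x \<in> S \<Longrightarrow> F x s t = hform e (c x) s t"
    using assms unfolding binary_form_def by metis
  have "(\<Sum>x\<in>S. w x * F x s t) = hform e (\<lambda>i. \<Sum>x\<in>S. w x * c x i) s t" for s t
    unfolding hform_sum_coeffs by (auto intro!: sum.cong simp: c)
  then show ?thesis unfolding binary_form_def by blast
qed

lemma binary_form_mult_linear:
  assumes "binary_form e F"
  shows "binary_form (Suc e) (\<lambda>s t. F s t * (s * a + t * b))"
proof -
  obtain c where c: "\<And>s t. F s t = hform e c s t" using assms unfolding binary_form_def by blast
  define c' where "c' j = (if j = 0 then 0 else a * c (j - 1)) + (if j \<le> e then b * c j else 0)" for j
  have "F s t * (s * a + t * b) = hform (Suc e) c' s t" for s t
  proof -
    have shift: "(\<Sum>j\<le>Suc e. (if j = 0 then 0 else a * c (j - 1)) * s ^ j * t ^ (Suc e - j))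
        = (\<Sum>i\<le>e. c i * s ^ i * t ^ (e - i) * (s * a))"
      by (subst sum.atMost_Suc_shift) (simp add: mult_ac)
    have top: "(\<Sum>j\<le>Suc e. (if j \<le> e then b * c j else 0) * s ^ j * t ^ (Suc e - j))
        = (\<Sum>i\<le>e. c i * s ^ i * t ^ (e - i) * (t * b))"
      by (subst sum.atMost_Suc) (auto simp: Suc_diff_le mult_ac intro!: sum.cong)
    have "hform (Suc e) c' s t
        = (\<Sum>j\<le>Suc e. (if j = 0 then 0 else a * c (j - 1)) * s ^ j * t ^ (Suc e - j))
          + (\<Sum>j\<le>Suc e. (if j \<le> e then b * c j else 0) * s ^ j * t ^ (Suc e - j))"
      unfolding hform_def c'_def by (simp add: distrib_right sum.distrib)
    also have "\<dots> = F s t * (s * a + t * b)"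
      unfolding shift top c hform_def by (simp add: distrib_left sum_distrib_right sum.distrib)
    finally show ?thesis by simp
  qed
  then show ?thesis unfolding binary_form_def by blast
qed

lemma binary_form_prod_linear: "binary_form m (\<lambda>s t. \<Prod>k<m. s * a k + t * b k)"
proof (induction m)
  case 0
  have "(\<Prod>k<0. s * a k + t * b k) = hform 0 (\<lambda>_. 1) s t" for s t by (simp add: hform_def)
  then show ?case unfolding binary_form_def by blast
next
  case (Suc m)
  show ?case using binary_form_mult_linear[OF Suc, of "a m" "b m"] by (simp add: mult_ac)
qed

lemma binary_form_det_pencil:
  assumes A: "A \<in> carrier_mat d d" and B: "B \<in> carrier_mat d d"
  shows "binary_form d (\<lambda>s t. det (s \<cdot>\<^sub>m A + t \<cdot>\<^sub>m B))"
proof -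
  have "binary_form d (\<lambda>s t. \<Sum>p\<in>{p. p permutes {0..<d}}. signof p *
      (\<Prod>i<d. s * A $$ (i, p i) + t * B $$ (i, p i)))"
    by (rule binary_form_sum) (rule binary_form_prod_linear)
  moreover have "det (s \<cdot>\<^sub>m A + t \<cdot>\<^sub>m B) = (\<Sum>p\<in>{p. p permutes {0..<d}}. signof p *
      (\<Prod>i<d. s * A $$ (i, p i) + t * B $$ (i, p i)))" for s t
    using A B unfolding det_def
    by (auto simp: atLeast0LessThan permutes_in_image intro!: sum.cong prod.cong)
  ultimately show ?thesis by simp
qed

lemma hform_homogeneous:
  assumes "s \<noteq> 0"
  shows "hform e c s t = s ^ e * hform e c 1 (t / s)"
  unfolding hform_def sum_distrib_left
proof (rule sum.cong[OF refl])
  fix i assume "i \<in> {..e}"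
  then have "s ^ e = s ^ i * s ^ (e - i)" by (simp add: power_add[symmetric])
  then show "c i * s ^ i * t ^ (e - i) = s ^ e * (c i * 1 ^ i * (t / s) ^ (e - i))"
    using assms by (simp add: power_divide field_simps)
qed

lemma hform_0_left: "hform e c 0 t = c 0 * t ^ e"
proof -
  have "hform e c 0 t = (\<Sum>i\<le>e. if i = 0 then c 0 * t ^ e else 0)"
    unfolding hform_def by (rule sum.cong) (auto simp: power_0_left)
  then show ?thesis by simp
qed

definition chart_poly :: "nat \<Rightarrow> (nat \<Rightarrow> complex) \<Rightarrow> complex poly" where
  "chart_poly e c = (\<Sum>i\<le>e. monom (c i) (e - i))"

lemma poly_chart_poly: "poly (chart_poly e c) z = hform e c 1 z"
  unfolding chart_poly_def hform_def by (simp add: poly_sum poly_monom)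

lemma degree_chart_poly_le: "degree (chart_poly e c) \<le> e"
  unfolding chart_poly_def by (rule degree_sum_le) (auto intro: order.trans[OF degree_monom_le])

lemma coeff_chart_poly_top: "coeff (chart_poly e c) e = hform e c 0 1"
proof -
  have "coeff (chart_poly e c) e = (\<Sum>i\<le>e. if i = 0 then c 0 else 0)"
    unfolding chart_poly_def coeff_sum coeff_monom by (rule sum.cong) auto
  then show ?thesis by (simp add: hform_0_left)
qed

lemma degree_chart_poly_less:
  assumes "hform e c 0 1 = 0" "1 \<le> e"
  shows "degree (chart_poly e c) \<le> e - 1"
proof (rule ccontr)
  assume "\<not> degree (chart_poly e c) \<le> e - 1"
  then have "degree (chart_poly e c) = e"
    using degree_chart_poly_le[of e c] by linarith
  then have "chart_poly e c = 0"
    using coeff_chart_poly_top[of e c] assms(1) by (metis leading_coeff_0_iff)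
  then show False
    using \<open>degree (chart_poly e c) = e\<close> \<open>\<not> degree (chart_poly e c) \<le> e - 1\<close> by simp
qed

lemma degree_chart_poly_eq:
  assumes "hform e c 0 1 \<noteq> 0"
  shows "degree (chart_poly e c) = e"
  using degree_chart_poly_le[of e c] coeff_chart_poly_top[of e c] assms le_degree[of "chart_poly e c" e]
  by simp

lemma poly_eq_off_roots:
  fixes p q r :: "complex poly"
  assumes "r \<noteq> 0" and eq: "\<And>z. poly r z \<noteq> 0 \<Longrightarrow> poly p z = poly q z"
  shows "p = q"
proof (rule ccontr)
  assume "p \<noteq> q"
  then have "finite ({z. poly (p - q) z = 0} \<union> {z. poly r z = 0})"
    using poly_roots_finite[of "p - q"] poly_roots_finite[OF assms(1)] by simp
  then obtain z where "z \<notin> {z. poly (p - q) z = 0} \<union> {z. poly r z = 0}"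
    using ex_new_if_finite[OF infinite_UNIV_char_0] by blast
  then show False using eq[of z] by simp
qed

lemma poly_degree_0: "degree p = 0 \<Longrightarrow> poly p z = poly p 0"
  by (elim degree_eq_zeroE) simp

section \<open>Adjugates\<close>

lemma smult_mat_cancel:
  fixes A B :: "'a :: idom mat"
  assumes "k \<noteq> 0" "k \<cdot>\<^sub>m A = k \<cdot>\<^sub>m B" "A \<in> carrier_mat n m" "B \<in> carrier_mat n m"
  shows "A = B"
proof (rule eq_matI)
  fix i j assume "i < dim_row B" "j < dim_col B"
  then have "k * A $$ (i, j) = k * B $$ (i, j)"
    using arg_cong[OF assms(2), of "\<lambda>M. M $$ (i, j)"] assms(3,4) by simp
  then show "A $$ (i, j) = B $$ (i, j)" using assms(1) by simp
qed (use assms in auto)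

lemma one_smult_mat [simp]: "1 \<cdot>\<^sub>m A = (A :: 'a :: comm_ring_1 mat)"
  by (rule eq_matI) auto

lemma mult_smult_one_mat [simp]: "dim_col A = d \<Longrightarrow> A * (k \<cdot>\<^sub>m 1\<^sub>m d) = k \<cdot>\<^sub>m (A :: 'a :: comm_ring_1 mat)"
  using mult_smult_distrib[OF carrier_matI[of A "dim_row A" d] one_carrier_mat] by simp

lemma smult_one_mat_mult [simp]: "dim_row A = d \<Longrightarrow> (k \<cdot>\<^sub>m 1\<^sub>m d) * A = k \<cdot>\<^sub>m (A :: 'a :: comm_ring_1 mat)"
  using mult_smult_assoc_mat[OF one_carrier_mat carrier_matI[of A d "dim_col A"]] by simp

lemma smult_smult_mat: "a \<cdot>\<^sub>m (b \<cdot>\<^sub>m A) = (a * b) \<cdot>\<^sub>m (A :: 'a :: comm_ring_1 mat)"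
  by (rule eq_matI) auto

lemma mult_adj_mult:
  fixes X Y :: "'a :: comm_ring_1 mat"
  assumes X: "X \<in> carrier_mat d d" and Y: "Y \<in> carrier_mat m d"
  shows "Y * adj_mat X * X = det X \<cdot>\<^sub>m Y"
proof -
  have "Y * adj_mat X * X = Y * (adj_mat X * X)"
    using adj_mat(1)[OF X] by (rule assoc_mult_mat[OF Y _ X])
  also have "\<dots> = det X \<cdot>\<^sub>m Y"
    unfolding adj_mat(3)[OF X] mult_smult_distrib[OF Y one_carrier_mat] using Y by simp
  finally show ?thesis .
qed

lemma mult_adj_mult_adj:
  fixes X Y :: "'a :: comm_ring_1 mat"
  assumes X: "X \<in> carrier_mat d d" and Y: "Y \<in> carrier_mat d d"
  shows "(X * adj_mat Y) * (Y * adj_mat X) = (det X * det Y) \<cdot>\<^sub>m 1\<^sub>m d"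
proof -
  note adj = adj_mat(1)[OF X] adj_mat(1)[OF Y]
  have "(X * adj_mat Y) * (Y * adj_mat X) = X * (adj_mat Y * (Y * adj_mat X))"
    by (rule assoc_mult_mat[OF X adj(2) mult_carrier_mat[OF Y adj(1)]])
  also have "adj_mat Y * (Y * adj_mat X) = (adj_mat Y * Y) * adj_mat X"
    by (rule assoc_mult_mat[symmetric, OF adj(2) Y adj(1)])
  also have "\<dots> = det Y \<cdot>\<^sub>m adj_mat X"
    unfolding adj_mat(3)[OF Y] mult_smult_assoc_mat[OF one_carrier_mat adj(1)] left_mult_one_mat[OF adj(1)] ..
  also have "X * (det Y \<cdot>\<^sub>m adj_mat X) = det Y \<cdot>\<^sub>m (det X \<cdot>\<^sub>m 1\<^sub>m d)"
    unfolding mult_smult_distrib[OF X adj(1)] adj_mat(2)[OF X] ..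
  also have "\<dots> = (det X * det Y) \<cdot>\<^sub>m 1\<^sub>m d"
    by (simp add: smult_smult_mat mult.commute)
  finally show ?thesis .
qed

lemma det_mult_adj:
  fixes X Y :: "complex mat"
  assumes X: "X \<in> carrier_mat d d" and Y: "Y \<in> carrier_mat d d" and "1 \<le> d" and "det X \<noteq> 0"
  shows "det (Y * adj_mat X) = det Y * det X ^ (d - 1)"
proof -
  have "det X * det (adj_mat X) = det X ^ d"
    using det_mult[OF X adj_mat(1)[OF X]] adj_mat(2)[OF X] by simp
  also have "\<dots> = det X * det X ^ (d - 1)" using \<open>1 \<le> d\<close> by (simp add: power_eq_if)
  finally have "det (adj_mat X) = det X ^ (d - 1)" using \<open>det X \<noteq> 0\<close> by simp
  then show ?thesis using det_mult[OF Y adj_mat(1)[OF X]] by simp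
qed

lemma adj_mat_map_hom:
  assumes h: "comm_ring_hom h" and A: "A \<in> carrier_mat n n"
  shows "adj_mat (map_mat h A) = map_mat h (adj_mat A)"
proof (rule eq_matI)
  interpret comm_ring_hom h by (rule h)
  fix i j assume ij: "i < dim_row (map_mat h (adj_mat A))" "j < dim_col (map_mat h (adj_mat A))"
  have "mat_delete (map_mat h A) j i = map_mat h (mat_delete A j i)"
    unfolding mat_delete_def using A by (intro eq_matI) auto
  then have "cofactor (map_mat h A) j i = h (cofactor A j i)"
    unfolding cofactor_def by (simp add: hom_distribs)
  then show "adj_mat (map_mat h A) $$ (i, j) = map_mat h (adj_mat A) $$ (i, j)"
    using ij A by (simp add: adj_mat_def)
qed (use A in \<open>auto simp: adj_mat_def\<close>)

lemma mult_adj_mat_index: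
  assumes X: "X \<in> carrier_mat d d" and Y: "Y \<in> carrier_mat d d" and ij: "i < d" "j < d"
  shows "(Y * adj_mat X) $$ (i, j) = det (mat d d (\<lambda>(r, k). if r = j then Y $$ (i, k) else X $$ (r, k)))"
proof -
  define B where "B = mat d d (\<lambda>(r, k). if r = j then Y $$ (i, k) else X $$ (r, k))"
  have "(Y * adj_mat X) $$ (i, j) = (\<Sum>k<d. Y $$ (i, k) * cofactor X j k)"
    unfolding times_mat_def scalar_prod_def adj_mat_def using ij X Y by (auto intro: sum.cong)
  also have "\<dots> = (\<Sum>k<d. B $$ (j, k) * cofactor B j k)"
  proof (rule sum.cong[OF refl])
    fix k assume k: "k \<in> {..<d}"
    have "mat_delete B j k = mat_delete X j k"
      unfolding mat_delete_def B_def using X ij k by (intro eq_matI) auto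
    then show "Y $$ (i, k) * cofactor X j k = B $$ (j, k) * cofactor B j k"
      using k ij by (simp add: cofactor_def B_def)
  qed
  also have "\<dots> = det B"
    by (rule laplace_expansion_row[symmetric]) (use ij in \<open>auto simp: B_def\<close>)
  finally show ?thesis unfolding B_def .
qed

lemma smult_mult_smult_mat:
  assumes "A \<in> carrier_mat n m" "B \<in> carrier_mat m l"
  shows "(a \<cdot>\<^sub>m A) * (b \<cdot>\<^sub>m B) = (a * b) \<cdot>\<^sub>m (A * (B :: 'a :: comm_ring_1 mat))"
  by (rule eq_matI) (use assms in \<open>auto simp: scalar_prod_def sum_distrib_left mult_ac\<close>)

text \<open>The next three lemmas are used pointwise, where the minors of a frame are known only up to a
  common nonzero factor \<open>c\<close>.\<close>

lemma mult_adj_products_scaled: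
  fixes X Y Q R :: "complex mat"
  assumes car: "X \<in> carrier_mat d d" "Y \<in> carrier_mat d d" "Q \<in> carrier_mat d d" "R \<in> carrier_mat d d"
    and "c \<noteq> 0" and YX: "Y * adj_mat X = c \<cdot>\<^sub>m Q" and XY: "X * adj_mat Y = c \<cdot>\<^sub>m R"
    and "det X = c * e" and "det Y = c * \<delta>"
  shows "R * Q = (e * \<delta>) \<cdot>\<^sub>m 1\<^sub>m d"
proof -
  have "(c * c) \<cdot>\<^sub>m (R * Q) = (X * adj_mat Y) * (Y * adj_mat X)"
    unfolding YX XY by (rule smult_mult_smult_mat[OF car(4,3), symmetric])
  also have "\<dots> = (det X * det Y) \<cdot>\<^sub>m 1\<^sub>m d"
    by (rule mult_adj_mult_adj[OF car(1,2)])
  also have "\<dots> = (c * c) \<cdot>\<^sub>m ((e * \<delta>) \<cdot>\<^sub>m 1\<^sub>m d)"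
    unfolding smult_smult_mat \<open>det X = c * e\<close> \<open>det Y = c * \<delta>\<close> by (simp only: mult_ac)
  finally have eq: "(c * c) \<cdot>\<^sub>m (R * Q) = (c * c) \<cdot>\<^sub>m ((e * \<delta>) \<cdot>\<^sub>m 1\<^sub>m d)" .
  have "c * c \<noteq> 0" using \<open>c \<noteq> 0\<close> by simp
  then show ?thesis by (rule smult_mat_cancel[OF _ eq mult_carrier_mat[OF car(4,3)]]) simp
qed

lemma det_mult_adj_scaled:
  fixes X Y Q :: "complex mat"
  assumes car: "X \<in> carrier_mat d d" "Y \<in> carrier_mat d d" "Q \<in> carrier_mat d d"
    and "1 \<le> d" "c \<noteq> 0" "e \<noteq> 0" and YX: "Y * adj_mat X = c \<cdot>\<^sub>m Q"
    and dX: "det X = c * e" and dY: "det Y = c * \<delta>"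
  shows "det Q = e ^ (d - 1) * \<delta>"
proof -
  have "c ^ d * det Q = det (Y * adj_mat X)"
    unfolding YX using car(3) by simp
  also have "\<dots> = c * \<delta> * (c * e) ^ (d - 1)"
    using det_mult_adj[OF car(1,2) \<open>1 \<le> d\<close>] \<open>c \<noteq> 0\<close> \<open>e \<noteq> 0\<close> by (simp add: dX dY)
  also have "\<dots> = c ^ d * (e ^ (d - 1) * \<delta>)"
    using \<open>1 \<le> d\<close> by (cases d) (simp_all add: power_mult_distrib)
  finally show ?thesis using \<open>c \<noteq> 0\<close> by simp
qed

lemma mult_adj_scaled_mult:
  fixes X Y G :: "complex mat"
  assumes car: "X \<in> carrier_mat d d" "Y \<in> carrier_mat d d" "G \<in> carrier_mat d d"
    and "c \<noteq> 0" and dX: "det X = c * a" and YX: "Y * adj_mat X = c \<cdot>\<^sub>m G"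
  shows "a \<cdot>\<^sub>m Y = G * X"
proof -
  have "c \<cdot>\<^sub>m (a \<cdot>\<^sub>m Y) = Y * adj_mat X * X"
    unfolding mult_adj_mult[OF car(1,2)] dX by (simp add: smult_smult_mat)
  also have "\<dots> = c \<cdot>\<^sub>m (G * X)"
    unfolding YX by (rule mult_smult_assoc_mat[OF car(3,1)])
  finally have "c \<cdot>\<^sub>m (a \<cdot>\<^sub>m Y) = c \<cdot>\<^sub>m (G * X)" .
  then show ?thesis
    by (rule smult_mat_cancel[OF \<open>c \<noteq> 0\<close> _ _ mult_carrier_mat[OF car(3,1)]]) (use car(2) in simp)
qed

abbreviation eval_mat :: "complex \<Rightarrow> complex poly mat \<Rightarrow> complex mat" where
  "eval_mat z M \<equiv> map_mat (\<lambda>p. poly p z) M"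

lemma det_eval_mat: "det (eval_mat z M) = poly (det M) z"
  by (rule comm_ring_hom.hom_det) (unfold_locales; auto)

section \<open>Morphisms in terms of matrix frames\<close>

lemma grass_point_mat_frame:
  assumes "grass_point n d S"
  obtains M where "mat_frame n d M" "S = col_space M"
proof -
  obtain A where A: "frame n d A" "S = colspan d A"
    using assms unfolding grass_point_def by blast
  have "mat_frame n d (mat_of_cmat n d A)"
    using A(1) frame_iff_mat_frame[of n d A] by (auto simp: frame_def)
  moreover have "S = col_space (mat_of_cmat n d A)"
    using A colspan_eq_col_space by simp
  ultimately show ?thesis using that by blast
qed

lemma grass_morphismI:
  assumes frame: "\<And>s t. (s, t) \<noteq> (0, 0) \<Longrightarrow> mat_frame n d (M s t)"
    and span: "\<And>s t. (s, t) \<noteq> (0, 0) \<Longrightarrow> f (s, t) = col_space (M s t)"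
    and coords: "\<And>I s t. I \<in> dsubsets n d \<Longrightarrow> pluecker_coord d I (M s t) = hform e (P I) s t"
  shows "grass_morphism n d e f"
  unfolding grass_morphism_def
proof (intro exI[of _ P] allI impI conjI)
  fix s t :: complex assume st: "(s, t) \<noteq> (0, 0)"
  have M: "M s t \<in> carrier_mat n d" using frame[OF st] by (rule mat_frame_carrier)
  show "\<exists>I\<in>dsubsets n d. hform e (P I) s t \<noteq> 0"
    using frame[OF st] coords by (auto simp: mat_frame_def)
  show "\<exists>A. frame n d A \<and> f (s, t) = colspan d A \<and>
      (\<exists>c. c \<noteq> 0 \<and> (\<forall>I\<in>dsubsets n d. minor d A I = c * hform e (P I) s t))"
  proof (intro exI conjI)
    show "frame n d (cmat_of_mat (M s t))" by (rule frame_cmat_of_mat[OF frame[OF st]])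
    show "f (s, t) = colspan d (cmat_of_mat (M s t))"
      using span[OF st] colspan_cmat_of_mat[OF M] by simp
    show "\<forall>I\<in>dsubsets n d. minor d (cmat_of_mat (M s t)) I = 1 * hform e (P I) s t"
      using minor_eq_pluecker_coord coords M by simp
  qed simp
qed

lemma det_mult_form_if_pluecker_forms:
  assumes L: "L \<in> carrier_mat d n" and "d \<le> n" and M: "\<And>s t. M s t \<in> carrier_mat n d"
    and coords: "\<And>I s t. (s, t) \<noteq> (0, 0) \<Longrightarrow> I \<in> dsubsets n d \<Longrightarrow>
                   pluecker_coord d I (M s t) = c s t * hform e (P I) s t"
  shows "\<exists>h. \<forall>s t. (s, t) \<noteq> (0, 0) \<longrightarrow> det (L * M s t) = c s t * hform e h s t"
proof -
  obtain lam where lam: "\<And>M. M \<in> carrier_mat n d \<Longrightarrow>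
      det (L * M) = (\<Sum>I\<in>dsubsets n d. lam I * pluecker_coord d I M)"
    using cauchy_binet_lincomb[OF L assms(2)] by blast
  have "det (L * M s t) = c s t * hform e (\<lambda>i. \<Sum>I\<in>dsubsets n d. lam I * P I i) s t"
    if st: "(s, t) \<noteq> (0, 0)" for s t
  proof -
    have "det (L * M s t) = (\<Sum>I\<in>dsubsets n d. c s t * (lam I * hform e (P I) s t))"
      unfolding lam[OF M] by (rule sum.cong) (simp_all add: coords[OF st])
    also have "\<dots> = c s t * hform e (\<lambda>i. \<Sum>I\<in>dsubsets n d. lam I * P I i) s t"
      by (simp add: hform_sum_coeffs sum_distrib_left)
    finally show ?thesis .
  qed
  then show ?thesis by blast
qed

lemma grass_morphism_frames:
  assumes "grass_morphism n d e f" "d \<le> n"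
  obtains M c where
    "\<And>s t. M s t \<in> carrier_mat n d"
    "\<And>s t. (s, t) \<noteq> (0, 0) \<Longrightarrow> mat_frame n d (M s t)"
    "\<And>s t. (s, t) \<noteq> (0, 0) \<Longrightarrow> f (s, t) = col_space (M s t)"
    "\<And>s t. (s, t) \<noteq> (0, 0) \<Longrightarrow> c s t \<noteq> 0"
    "\<And>L. L \<in> carrier_mat d n \<Longrightarrow>
       \<exists>h. \<forall>s t. (s, t) \<noteq> (0, 0) \<longrightarrow> det (L * M s t) = c s t * hform e h s t"
proof -
  obtain P where P: "\<And>s t. (s, t) \<noteq> (0, 0) \<Longrightarrow> \<exists>A. frame n d A \<and> f (s, t) = colspan d A \<and>
      (\<exists>c. c \<noteq> 0 \<and> (\<forall>I\<in>dsubsets n d. minor d A I = c * hform e (P I) s t))"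
    using assms(1) unfolding grass_morphism_def by blast
  define A where "A s t = (SOME A. frame n d A \<and> f (s, t) = colspan d A \<and>
      (\<exists>c. c \<noteq> 0 \<and> (\<forall>I\<in>dsubsets n d. minor d A I = c * hform e (P I) s t)))" for s t
  define c where "c s t = (SOME c. c \<noteq> 0 \<and>
      (\<forall>I\<in>dsubsets n d. minor d (A s t) I = c * hform e (P I) s t))" for s t
  define M where "M s t = mat_of_cmat n d (A s t)" for s t
  have A: "frame n d (A s t)" "f (s, t) = colspan d (A s t)"
    "\<exists>c. c \<noteq> 0 \<and> (\<forall>I\<in>dsubsets n d. minor d (A s t) I = c * hform e (P I) s t)"
    if "(s, t) \<noteq> (0, 0)" for s t
    using someI_ex[OF P[OF that]] unfolding A_def by blast+
  have c: "c s t \<noteq> 0" "\<And>I. I \<in> dsubsets n d \<Longrightarrow> minor d (A s t) I = c s t * hform e (P I) s t"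
    if "(s, t) \<noteq> (0, 0)" for s t
    using someI_ex[OF A(3)[OF that]] unfolding c_def by blast+
  have carrier: "M s t \<in> carrier_mat n d" for s t by (simp add: M_def)
  have frame: "mat_frame n d (M s t)" and span: "f (s, t) = col_space (M s t)"
    if "(s, t) \<noteq> (0, 0)" for s t
    using A(1,2)[OF that] frame_iff_mat_frame[of n d "A s t"] colspan_eq_col_space[of n d "A s t"]
    by (auto simp: M_def frame_def)
  have coords: "pluecker_coord d I (M s t) = c s t * hform e (P I) s t"
    if "(s, t) \<noteq> (0, 0)" "I \<in> dsubsets n d" for I s t
    using c(2)[OF that] minor_eq_pluecker_coord[OF that(2)] by (simp add: M_def)
  have forms: "\<exists>h. \<forall>s t. (s, t) \<noteq> (0, 0) \<longrightarrow> det (L * M s t) = c s t * hform e h s t"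
    if "L \<in> carrier_mat d n" for L
    by (rule det_mult_form_if_pluecker_forms[OF that assms(2) carrier coords])
  show ?thesis by (rule that[OF carrier frame span c(1) forms])
qed

section \<open>Curves of degree \<open>d\<close> through three standard points\<close>

text \<open>Asking all
  determinants \<open>det (L * (X @\<^sub>r Y))\<close>, not only the maximal minors, to be \<open>c\<close> times binary forms is
  equivalent by Cauchy--Binet, and is stable under a change of basis of \<open>\<complex>\<^sup>2\<^sup>d\<close>.\<close>

locale curve_through_standard_points =
  fixes d :: nat and X Y :: "complex \<Rightarrow> complex \<Rightarrow> complex mat" and c :: "complex \<Rightarrow> complex \<Rightarrow> complex"
  assumes d_pos: "1 \<le> d"
    and X_carrier: "\<And>s t. X s t \<in> carrier_mat d d"
    and Y_carrier: "\<And>s t. Y s t \<in> carrier_mat d d"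
    and c_nonzero: "\<And>s t. (s, t) \<noteq> (0, 0) \<Longrightarrow> c s t \<noteq> 0"
    and minors_forms: "\<And>L. L \<in> carrier_mat d (2 * d) \<Longrightarrow>
          \<exists>h. \<forall>s t. (s, t) \<noteq> (0, 0) \<longrightarrow> det (L * (X s t @\<^sub>r Y s t)) = c s t * hform d h s t"
    and at_0: "Y 1 0 = 0\<^sub>m d d" "det (X 1 0) \<noteq> 0"
    and at_infinity: "X 0 1 = 0\<^sub>m d d" "det (Y 0 1) \<noteq> 0"
    and at_1: "X 1 1 = Y 1 1" "det (X 1 1) \<noteq> 0"
begin

definition form_coeffs :: "complex mat \<Rightarrow> nat \<Rightarrow> complex" where
  "form_coeffs L = (SOME h. \<forall>s t. (s, t) \<noteq> (0, 0) \<longrightarrow> det (L * (X s t @\<^sub>r Y s t)) = c s t * hform d h s t)"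

lemma det_mult_eq_form:
  assumes "L \<in> carrier_mat d (2 * d)" "(s, t) \<noteq> (0, 0)"
  shows "det (L * (X s t @\<^sub>r Y s t)) = c s t * hform d (form_coeffs L) s t"
  using someI_ex[OF minors_forms[OF assms(1)]] assms(2) unfolding form_coeffs_def by blast

lemma rows_select_append_rows:
  assumes "\<And>r. r < d \<Longrightarrow> \<sigma> r < 2 * d"
  shows "rows_select d (2 * d) \<sigma> * (X s t @\<^sub>r Y s t)
    = mat d d (\<lambda>(r, k). if \<sigma> r < d then X s t $$ (\<sigma> r, k) else Y s t $$ (\<sigma> r - d, k))"
  using assms X_carrier Y_carrier
  by (subst rows_select_mult[OF append_rows_carrier_double])
     (auto simp: index_append_rows[of _ d d _ d] mult_2 intro!: eq_matI)

definition "detX_form = form_coeffs (rows_select d (2 * d) id)"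
definition "detY_form = form_coeffs (rows_select d (2 * d) ((+) d))"
definition "YadjX_form i j = form_coeffs (rows_select d (2 * d) (\<lambda>r. if r = j then d + i else r))"
definition "XadjY_form i j = form_coeffs (rows_select d (2 * d) (\<lambda>r. if r = j then i else d + r))"

lemma det_X: "(s, t) \<noteq> (0, 0) \<Longrightarrow> det (X s t) = c s t * hform d detX_form s t"
proof -
  have "rows_select d (2 * d) id * (X s t @\<^sub>r Y s t) = X s t"
    using X_carrier[of s t] by (subst rows_select_append_rows) (auto intro!: eq_matI)
  then show "(s, t) \<noteq> (0, 0) \<Longrightarrow> ?thesis"
    using det_mult_eq_form[of "rows_select d (2 * d) id" s t] by (simp add: detX_form_def)
qed

lemma det_Y: "(s, t) \<noteq> (0, 0) \<Longrightarrow> det (Y s t) = c s t * hform d detY_form s t"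
proof -
  have "rows_select d (2 * d) ((+) d) * (X s t @\<^sub>r Y s t) = Y s t"
    using Y_carrier[of s t] by (subst rows_select_append_rows) (auto intro!: eq_matI)
  then show "(s, t) \<noteq> (0, 0) \<Longrightarrow> ?thesis"
    using det_mult_eq_form[of "rows_select d (2 * d) ((+) d)" s t] by (simp add: detY_form_def)
qed

lemma Y_adj_X:
  assumes "(s, t) \<noteq> (0, 0)" "i < d" "j < d"
  shows "(Y s t * adj_mat (X s t)) $$ (i, j) = c s t * hform d (YadjX_form i j) s t"
proof -
  let ?\<sigma> = "\<lambda>r. if r = j then d + i else r"
  have "rows_select d (2 * d) ?\<sigma> * (X s t @\<^sub>r Y s t)
      = mat d d (\<lambda>(r, k). if r = j then Y s t $$ (i, k) else X s t $$ (r, k))"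
    using assms by (subst rows_select_append_rows) (auto intro!: eq_matI)
  then show ?thesis
    using det_mult_eq_form[of "rows_select d (2 * d) ?\<sigma>" s t] assms
      mult_adj_mat_index[OF X_carrier Y_carrier assms(2,3)]
    by (simp add: YadjX_form_def)
qed

lemma X_adj_Y:
  assumes "(s, t) \<noteq> (0, 0)" "i < d" "j < d"
  shows "(X s t * adj_mat (Y s t)) $$ (i, j) = c s t * hform d (XadjY_form i j) s t"
proof -
  let ?\<sigma> = "\<lambda>r. if r = j then i else d + r"
  have "rows_select d (2 * d) ?\<sigma> * (X s t @\<^sub>r Y s t)
      = mat d d (\<lambda>(r, k). if r = j then X s t $$ (i, k) else Y s t $$ (r, k))"
    using assms by (subst rows_select_append_rows) (auto intro!: eq_matI)
  then show ?thesis
    using det_mult_eq_form[of "rows_select d (2 * d) ?\<sigma>" s t] assms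
      mult_adj_mat_index[OF Y_carrier X_carrier assms(2,3)]
    by (simp add: XadjY_form_def)
qed


lemma detX_form_at_0: "hform d detX_form 1 0 \<noteq> 0"
  using det_X[of 1 0] at_0(2) by auto

lemma detY_form_at_infinity: "hform d detY_form 0 1 \<noteq> 0"
  using det_Y[of 0 1] at_infinity(2) by auto

lemma YadjX_form_at_0: "i < d \<Longrightarrow> j < d \<Longrightarrow> hform d (YadjX_form i j) 1 0 = 0"
  using Y_adj_X[of 1 0 i j] at_0(1) c_nonzero[of 1 0] adj_mat(1)[OF X_carrier[of 1 0]] by simp

lemma XadjY_form_at_infinity: "i < d \<Longrightarrow> j < d \<Longrightarrow> hform d (XadjY_form i j) 0 1 = 0"
  using X_adj_Y[of 0 1 i j] at_infinity(1) c_nonzero[of 0 1] adj_mat(1)[OF Y_carrier[of 0 1]] by simp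

definition "Q_poly = mat d d (\<lambda>(i, j). chart_poly d (YadjX_form i j))"
definition "R_poly = mat d d (\<lambda>(i, j). chart_poly d (XadjY_form i j))"

lemma Q_poly_carrier [simp]: "Q_poly \<in> carrier_mat d d" and R_poly_carrier [simp]: "R_poly \<in> carrier_mat d d"
  and dim_Q_poly [simp]: "dim_row Q_poly = d" "dim_col Q_poly = d"
  and dim_R_poly [simp]: "dim_row R_poly = d" "dim_col R_poly = d"
  by (simp_all add: Q_poly_def R_poly_def)

lemma chart_det_X: "det (X 1 z) = c 1 z * poly (chart_poly d detX_form) z"
  using det_X[of 1 z] by (simp add: poly_chart_poly)

lemma chart_det_Y: "det (Y 1 z) = c 1 z * poly (chart_poly d detY_form) z"
  using det_Y[of 1 z] by (simp add: poly_chart_poly)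

lemma chart_Y_adj_X: "Y 1 z * adj_mat (X 1 z) = c 1 z \<cdot>\<^sub>m eval_mat z Q_poly"
  using Y_adj_X[of 1 z] X_carrier[of 1 z] Y_carrier[of 1 z] adj_mat(1)[OF X_carrier[of 1 z]]
  by (auto simp: Q_poly_def poly_chart_poly intro!: eq_matI)

lemma chart_X_adj_Y: "X 1 z * adj_mat (Y 1 z) = c 1 z \<cdot>\<^sub>m eval_mat z R_poly"
  using X_adj_Y[of 1 z] X_carrier[of 1 z] Y_carrier[of 1 z] adj_mat(1)[OF Y_carrier[of 1 z]]
  by (auto simp: R_poly_def poly_chart_poly intro!: eq_matI)

lemma degree_chart_detY: "degree (chart_poly d detY_form) = d"
  by (rule degree_chart_poly_eq[OF detY_form_at_infinity])

lemma degree_chart_detX: "degree (chart_poly d detX_form) = 0"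
proof -
  let ?pX = "chart_poly d detX_form" and ?pY = "chart_poly d detY_form"
  have pY: "?pY \<noteq> 0" using detY_form_at_infinity coeff_chart_poly_top[of d detY_form] by auto
  have pX: "?pX \<noteq> 0" using detX_form_at_0 poly_chart_poly[of d detX_form 0] by auto
  have "det R_poly = ?pY ^ (d - 1) * ?pX"
  proof (rule poly_eq_off_roots[OF pY])
    fix z assume "poly ?pY z \<noteq> 0"
    then have "det (eval_mat z R_poly) = poly ?pY z ^ (d - 1) * poly ?pX z"
      using det_mult_adj_scaled[OF Y_carrier X_carrier _ d_pos c_nonzero _ chart_X_adj_Y chart_det_Y chart_det_X]
      by simp
    then show "poly (det R_poly) z = poly (?pY ^ (d - 1) * ?pX) z"
      by (simp add: det_eval_mat)
  qed
  moreover have "degree (det R_poly) \<le> (d - 1) * d"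
  proof (rule degree_det_le[OF _ R_poly_carrier])
    fix i j assume "i < d" "j < d"
    then show "degree (R_poly $$ (i, j)) \<le> d - 1"
      using degree_chart_poly_less[OF XadjY_form_at_infinity d_pos] by (simp add: R_poly_def)
  qed
  moreover have "degree (?pY ^ (d - 1) * ?pX) = (d - 1) * d + degree ?pX"
    using pX pY degree_chart_detY by (simp add: degree_mult_eq degree_power_eq)
  ultimately show ?thesis by simp
qed

definition "\<alpha> = poly (chart_poly d detX_form) 0"

lemma \<alpha>_nonzero: "\<alpha> \<noteq> 0"
  using detX_form_at_0 by (simp add: \<alpha>_def poly_chart_poly)

lemma chart_det_X_const: "det (X 1 z) = c 1 z * \<alpha>"
  using chart_det_X poly_degree_0[OF degree_chart_detX] by (simp add: \<alpha>_def)

definition "G_poly = map_mat (\<lambda>p. p div [:0, 1:]) Q_poly"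

lemma G_poly_carrier [simp]: "G_poly \<in> carrier_mat d d"
  and dim_G_poly [simp]: "dim_row G_poly = d" "dim_col G_poly = d"
  by (simp_all add: G_poly_def)

lemma Q_poly_eq_smult_G_poly: "Q_poly = [:0, 1:] \<cdot>\<^sub>m G_poly"
proof (rule eq_matI)
  fix i j assume "i < dim_row ([:0, 1:] \<cdot>\<^sub>m G_poly)" "j < dim_col ([:0, 1:] \<cdot>\<^sub>m G_poly)"
  then have ij: "i < d" "j < d" by simp_all
  have "poly (chart_poly d (YadjX_form i j)) 0 = 0"
    using YadjX_form_at_0[OF ij] by (simp add: poly_chart_poly)
  then have "[:0, 1:] dvd chart_poly d (YadjX_form i j)"
    by (simp add: dvd_iff_poly_eq_0)
  then have "chart_poly d (YadjX_form i j) = [:0, 1:] * (chart_poly d (YadjX_form i j) div [:0, 1:])"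
    by (rule dvd_mult_div_cancel[symmetric])
  then show "Q_poly $$ (i, j) = ([:0, 1:] \<cdot>\<^sub>m G_poly) $$ (i, j)"
    using ij by (simp add: Q_poly_def G_poly_def)
qed (simp_all add: Q_poly_def G_poly_def)

definition "\<kappa> = poly (det G_poly) 0"

definition "\<beta> = \<kappa> / \<alpha> ^ (d - 1)"

lemma det_G_poly_const: "det G_poly = [:\<kappa>:]" and \<kappa>_nonzero: "\<kappa> \<noteq> 0"
  and chart_det_Y_monomial: "poly (chart_poly d detY_form) z = \<beta> * z ^ d"
proof -
  let ?pY = "chart_poly d detY_form"
  have "det Q_poly = smult (\<alpha> ^ (d - 1)) ?pY"
  proof (rule poly_eq_off_roots[of 1])
    fix z :: complex
    have "det (eval_mat z Q_poly) = \<alpha> ^ (d - 1) * poly ?pY z"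
      by (rule det_mult_adj_scaled[OF X_carrier Y_carrier _ d_pos c_nonzero \<alpha>_nonzero chart_Y_adj_X
            chart_det_X_const chart_det_Y]) simp_all
    then show "poly (det Q_poly) z = poly (smult (\<alpha> ^ (d - 1)) ?pY) z"
      by (simp add: det_eval_mat)
  qed simp
  moreover have "det Q_poly = [:0, 1:] ^ d * det G_poly"
    unfolding Q_poly_eq_smult_G_poly by simp
  ultimately have eq: "[:0, 1:] ^ d * det G_poly = smult (\<alpha> ^ (d - 1)) ?pY" by simp
  have "?pY \<noteq> 0" using detY_form_at_infinity coeff_chart_poly_top[of d detY_form] by auto
  then have "det G_poly \<noteq> 0" using eq \<alpha>_nonzero by auto
  then have "d + degree (det G_poly) = d"
    using arg_cong[OF eq, of degree] \<alpha>_nonzero degree_chart_detY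
    by (simp add: degree_mult_eq degree_power_eq)
  then have "degree (det G_poly) = 0" by simp
  then show det_GP: "det G_poly = [:\<kappa>:]"
    unfolding \<kappa>_def by (elim degree_eq_zeroE) simp
  then show "\<kappa> \<noteq> 0" using \<open>det G_poly \<noteq> 0\<close> by simp
  have "\<kappa> * z ^ d = \<alpha> ^ (d - 1) * poly ?pY z"
    using arg_cong[OF eq, of "\<lambda>p. poly p z"] det_GP by (simp add: poly_power)
  then show "poly ?pY z = \<beta> * z ^ d"
    using \<alpha>_nonzero by (simp add: \<beta>_def field_simps)
qed

definition G :: "complex \<Rightarrow> complex mat" where "G z = eval_mat z G_poly"

lemma G_carrier [simp]: "G z \<in> carrier_mat d d"
  and dim_G [simp]: "dim_row (G z) = d" "dim_col (G z) = d"
  by (simp_all add: G_def)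

lemma det_G: "det (G z) = \<kappa>"
  by (simp add: G_def det_eval_mat det_G_poly_const)

lemma chart_Y_adj_X_G: "Y 1 z * adj_mat (X 1 z) = c 1 z \<cdot>\<^sub>m (z \<cdot>\<^sub>m G z)"
  unfolding chart_Y_adj_X Q_poly_eq_smult_G_poly G_def by (auto intro!: eq_matI)

lemma chart_X_adj_Y_mult_G:
  assumes "z \<noteq> 0"
  shows "eval_mat z R_poly * G z = (\<alpha> * \<beta> * z ^ (d - 1)) \<cdot>\<^sub>m 1\<^sub>m d"
proof -
  have "eval_mat z R_poly * (z \<cdot>\<^sub>m G z) = (\<alpha> * (\<beta> * z ^ d)) \<cdot>\<^sub>m 1\<^sub>m d"
    using chart_det_Y chart_det_Y_monomial
    by (intro mult_adj_products_scaled[OF X_carrier Y_carrier _ _ c_nonzero chart_Y_adj_X_G chart_X_adj_Y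
          chart_det_X_const]) simp_all
  also have "\<alpha> * (\<beta> * z ^ d) = z * (\<alpha> * \<beta> * z ^ (d - 1))"
    using d_pos by (cases d) simp_all
  finally have "z \<cdot>\<^sub>m (eval_mat z R_poly * G z) = z \<cdot>\<^sub>m ((\<alpha> * \<beta> * z ^ (d - 1)) \<cdot>\<^sub>m 1\<^sub>m d)"
    by (simp add: mult_smult_distrib[of _ d d _ d] smult_smult_mat)
  then show ?thesis
    by (rule smult_mat_cancel[OF assms _ mult_carrier_mat[of _ d d _ d]]) simp_all
qed

text \<open>Multiplying by \<open>adj G\<close> gives \<open>\<kappa> R = \<alpha> \<beta> z^(d-1) adj G\<close>; the degree bound on \<open>R\<close> forces \<open>adj G\<close>,
  and then \<open>G = \<kappa> (adj G)\<^sup>-\<^sup>1\<close>, to be constant.\<close>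

lemma degree_adj_G_poly:
  assumes ij: "i < d" "j < d"
  shows "degree (adj_mat G_poly $$ (i, j)) = 0"
proof -
  let ?A = "adj_mat G_poly $$ (i, j)"
  have adj_G: "adj_mat (G z) = eval_mat z (adj_mat G_poly)" for z
    unfolding G_def by (rule adj_mat_map_hom[OF _ G_poly_carrier]) (unfold_locales; auto)
  have AG: "adj_mat G_poly \<in> carrier_mat d d" by (rule adj_mat(1)[OF G_poly_carrier])
  have "smult \<kappa> (R_poly $$ (i, j)) = smult (\<alpha> * \<beta>) (monom 1 (d - 1) * ?A)"
  proof (rule poly_eq_off_roots[of "[:0, 1:]"])
    fix z :: complex assume "poly [:0, 1:] z \<noteq> 0"
    then have z: "z \<noteq> 0" by simp
    have "\<kappa> \<cdot>\<^sub>m eval_mat z R_poly = eval_mat z R_poly * G z * adj_mat (G z)"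
      using adj_mat(2)[OF G_carrier] det_G
      by (simp add: assoc_mult_mat[of _ d d _ d _ d] adj_mat(1)[OF G_carrier] mult_smult_distrib[of _ d d _ d])
    also have "\<dots> = (\<alpha> * \<beta> * z ^ (d - 1)) \<cdot>\<^sub>m adj_mat (G z)"
      unfolding chart_X_adj_Y_mult_G[OF z] using carrier_matD[OF adj_mat(1)[OF G_carrier]] by simp
    finally have "(\<kappa> \<cdot>\<^sub>m eval_mat z R_poly) $$ (i, j) = ((\<alpha> * \<beta> * z ^ (d - 1)) \<cdot>\<^sub>m adj_mat (G z)) $$ (i, j)"
      by simp
    then show "poly (smult \<kappa> (R_poly $$ (i, j))) z = poly (smult (\<alpha> * \<beta>) (monom 1 (d - 1) * ?A)) z"
      using ij AG by (simp add: adj_G poly_monom mult_ac)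
  qed simp
  moreover have "degree (R_poly $$ (i, j)) \<le> d - 1"
    using degree_chart_poly_less[OF XadjY_form_at_infinity[OF ij] d_pos] ij by (simp add: R_poly_def)
  ultimately have "degree (monom 1 (d - 1) * ?A) \<le> d - 1"
    using \<alpha>_nonzero \<kappa>_nonzero by (metis \<beta>_def degree_smult_eq divide_eq_0_iff mult_eq_0_iff power_eq_0_iff)
  then show ?thesis
    by (cases "?A = 0") (auto simp: degree_mult_eq degree_monom_eq)
qed

lemma G_const: "G z = G 1"
proof -
  have adj_G: "adj_mat (G w) = eval_mat w (adj_mat G_poly)" for w
    unfolding G_def by (rule adj_mat_map_hom[OF _ G_poly_carrier]) (unfold_locales; auto)
  have adj_const: "adj_mat (G z) = adj_mat (G 1)"
    unfolding adj_G using adj_mat(1)[OF G_poly_carrier] degree_adj_G_poly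
    by (auto simp: poly_degree_0[of _ z] poly_degree_0[of _ 1] intro!: eq_matI)
  have "\<kappa> \<cdot>\<^sub>m G z = G z * (adj_mat (G 1) * G 1)"
    using adj_mat(3)[OF G_carrier, of 1] det_G by simp
  also have "\<dots> = (G z * adj_mat (G z)) * G 1"
    unfolding adj_const using adj_mat(1)[OF G_carrier] by (simp add: assoc_mult_mat[of _ d d _ d _ d])
  also have "\<dots> = \<kappa> \<cdot>\<^sub>m G 1"
    using adj_mat(2)[OF G_carrier, of z] det_G by simp
  finally show ?thesis
    by (rule smult_mat_cancel[OF \<kappa>_nonzero _ G_carrier G_carrier])
qed

lemma G_eq: "G z = \<alpha> \<cdot>\<^sub>m 1\<^sub>m d"
proof -
  have "c 1 1 \<cdot>\<^sub>m G 1 = X 1 1 * adj_mat (X 1 1)"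
    using chart_Y_adj_X_G[of 1] at_1(1) by (simp add: one_smult_mat)
  also have "\<dots> = c 1 1 \<cdot>\<^sub>m (\<alpha> \<cdot>\<^sub>m 1\<^sub>m d)"
    using adj_mat(2)[OF X_carrier] chart_det_X_const[of 1] by (simp add: smult_smult_mat)
  finally have eq: "c 1 1 \<cdot>\<^sub>m G z = c 1 1 \<cdot>\<^sub>m (\<alpha> \<cdot>\<^sub>m 1\<^sub>m d)"
    using G_const[of z] by simp
  have "c 1 1 \<noteq> 0" by (rule c_nonzero) simp
  then show ?thesis by (rule smult_mat_cancel[OF _ eq G_carrier]) simp
qed

lemma chart_YadjX_form: "i < d \<Longrightarrow> j < d \<Longrightarrow> hform d (YadjX_form i j) 1 z = (if i = j then z * \<alpha> else 0)"
  using arg_cong[OF Q_poly_eq_smult_G_poly, of "\<lambda>M. poly (M $$ (i, j)) z"] G_eq[of z]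
  by (simp add: Q_poly_def G_def poly_chart_poly mat_eq_iff)

lemma chart_detX_form: "hform d detX_form 1 z = \<alpha>"
  using poly_degree_0[OF degree_chart_detX, of z] by (simp add: \<alpha>_def poly_chart_poly)

lemma frame_on_standard_line_affine:
  assumes "s \<noteq> 0"
  shows "\<exists>T\<in>carrier_mat d d. det T \<noteq> 0 \<and> X s t = s \<cdot>\<^sub>m T \<and> Y s t = t \<cdot>\<^sub>m T"
proof -
  have st: "(s, t) \<noteq> (0, 0)" using assms by simp
  define z where "z = t / s"
  define c' where "c' = c s t * s ^ d"
  have c': "c' \<noteq> 0" using c_nonzero[OF st] assms by (simp add: c'_def)
  have dX: "det (X s t) = c' * \<alpha>"
    using det_X[OF st] hform_homogeneous[OF assms, of d detX_form t] chart_detX_form[of z]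
    by (simp add: c'_def z_def mult_ac)
  have YX: "Y s t * adj_mat (X s t) = c' \<cdot>\<^sub>m ((z * \<alpha>) \<cdot>\<^sub>m 1\<^sub>m d)"
  proof (rule eq_matI)
    fix i j assume "i < dim_row (c' \<cdot>\<^sub>m ((z * \<alpha>) \<cdot>\<^sub>m 1\<^sub>m d))" "j < dim_col (c' \<cdot>\<^sub>m ((z * \<alpha>) \<cdot>\<^sub>m 1\<^sub>m d))"
    then have ij: "i < d" "j < d" by auto
    show "(Y s t * adj_mat (X s t)) $$ (i, j) = (c' \<cdot>\<^sub>m ((z * \<alpha>) \<cdot>\<^sub>m 1\<^sub>m d)) $$ (i, j)"
      using Y_adj_X[OF st ij] hform_homogeneous[OF assms, of d "YadjX_form i j" t] chart_YadjX_form[OF ij, of z] ij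
      by (simp add: c'_def z_def mult_ac)
  qed (use X_carrier[of s t] Y_carrier[of s t] adj_mat(1)[OF X_carrier[of s t]] in auto)
  have "\<alpha> \<cdot>\<^sub>m Y s t = ((z * \<alpha>) \<cdot>\<^sub>m 1\<^sub>m d) * X s t"
    by (rule mult_adj_scaled_mult[OF X_carrier Y_carrier _ c' dX YX]) simp
  also have "\<dots> = \<alpha> \<cdot>\<^sub>m (z \<cdot>\<^sub>m X s t)"
    using X_carrier[of s t] by (simp add: smult_smult_mat mult.commute)
  finally have Y: "Y s t = z \<cdot>\<^sub>m X s t"
    by (rule smult_mat_cancel[OF \<alpha>_nonzero _ Y_carrier]) (use X_carrier[of s t] in simp)
  define T where "T = (1 / s) \<cdot>\<^sub>m X s t"
  have "T \<in> carrier_mat d d" "det T \<noteq> 0"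
    using X_carrier[of s t] dX c' \<alpha>_nonzero assms by (simp_all add: T_def)
  moreover have "X s t = s \<cdot>\<^sub>m T" "Y s t = t \<cdot>\<^sub>m T"
    using assms unfolding Y T_def z_def by (simp_all add: smult_smult_mat)
  ultimately show ?thesis by blast
qed

lemma frame_on_standard_line_infinity:
  assumes "t \<noteq> 0"
  shows "\<exists>T\<in>carrier_mat d d. det T \<noteq> 0 \<and> X 0 t = 0 \<cdot>\<^sub>m T \<and> Y 0 t = t \<cdot>\<^sub>m T"
proof -
  have st: "(0, t) \<noteq> (0, 0)" using assms by simp
  have XY: "X 0 t * adj_mat (Y 0 t) = 0\<^sub>m d d"
  proof (rule eq_matI)
    fix i j assume "i < dim_row (0\<^sub>m d d :: complex mat)" "j < dim_col (0\<^sub>m d d :: complex mat)"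
    then have ij: "i < d" "j < d" by auto
    have "hform d (XadjY_form i j) 0 t = 0"
      using XadjY_form_at_infinity[OF ij] by (simp add: hform_0_left)
    then show "(X 0 t * adj_mat (Y 0 t)) $$ (i, j) = (0\<^sub>m d d :: complex mat) $$ (i, j)"
      using X_adj_Y[OF st ij] ij by simp
  qed (use X_carrier[of 0 t] adj_mat(1)[OF Y_carrier[of 0 t]] in auto)
  have dY: "det (Y 0 t) \<noteq> 0"
    using det_Y[OF st] c_nonzero[OF st] assms detY_form_at_infinity by (simp add: hform_0_left)
  have "det (Y 0 t) \<cdot>\<^sub>m X 0 t = 0\<^sub>m d d"
    using mult_adj_mult[OF Y_carrier X_carrier, of 0 t 0 t] Y_carrier[of 0 t] by (simp add: XY)
  then have X0: "X 0 t = 0\<^sub>m d d"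
    by (intro smult_mat_cancel[OF dY _ X_carrier]) simp_all
  define T where "T = (1 / t) \<cdot>\<^sub>m Y 0 t"
  have "T \<in> carrier_mat d d" "det T \<noteq> 0"
    using Y_carrier[of 0 t] dY assms by (simp_all add: T_def)
  moreover have "X 0 t = 0 \<cdot>\<^sub>m T" "Y 0 t = t \<cdot>\<^sub>m T"
    using assms X0 Y_carrier[of 0 t] by (auto simp: T_def smult_smult_mat intro!: eq_matI)
  ultimately show ?thesis by blast
qed

theorem frame_on_standard_line:
  assumes "(s, t) \<noteq> (0, 0)"
  shows "\<exists>T\<in>carrier_mat d d. det T \<noteq> 0 \<and> X s t = s \<cdot>\<^sub>m T \<and> Y s t = t \<cdot>\<^sub>m T"
  using frame_on_standard_line_affine[of s t] frame_on_standard_line_infinity[of t] assms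
  by (cases "s = 0") auto

end

section \<open>Three transversal points\<close>

lemma det_append_cols_transversal:
  assumes U: "mat_frame (2 * d) d MU" and W: "mat_frame (2 * d) d MW"
    and UW: "col_space MU \<inter> col_space MW = {\<lambda>_. 0}"
  shows "det (append_cols MU MW) \<noteq> 0"
proof (rule det_nonzero_if_injective)
  have MU: "MU \<in> carrier_mat (2 * d) d" and MW: "MW \<in> carrier_mat (2 * d) d"
    using U W by (simp_all add: mat_frame_carrier)
  then show "append_cols MU MW \<in> carrier_mat (2 * d) (2 * d)"
    using append_cols_carrier[OF MU MW] by (simp add: mult_2)
  fix x assume x: "x \<in> carrier_vec (2 * d)" "append_cols MU MW *\<^sub>v x = 0\<^sub>v (2 * d)"
  define v w where "v = vec_first x d" and "w = vec_last x d"
  have x_eq: "x = v @\<^sub>v w" using x(1) by (simp add: v_def w_def mult_2)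
  have v: "v \<in> carrier_vec d" and w: "w \<in> carrier_vec d" by (simp_all add: v_def w_def)
  have sum0: "MU *\<^sub>v v + MW *\<^sub>v w = 0\<^sub>v (2 * d)"
    using x(2) append_cols_mult_vec[OF MU MW v w] by (simp add: x_eq)
  have "MU *\<^sub>v v = (- 1) \<cdot>\<^sub>v (MW *\<^sub>v w)"
  proof (rule eq_vecI)
    fix i assume "i < dim_vec ((- 1) \<cdot>\<^sub>v (MW *\<^sub>v w))"
    then have "i < 2 * d" using MW by simp
    then have "(MU *\<^sub>v v) $ i + (MW *\<^sub>v w) $ i = 0"
      using arg_cong[OF sum0, of "\<lambda>u. u $ i"] MW by simp
    then show "(MU *\<^sub>v v) $ i = ((- 1) \<cdot>\<^sub>v (MW *\<^sub>v w)) $ i"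
      using \<open>i < 2 * d\<close> MW by (simp add: eq_neg_iff_add_eq_0)
  qed (use MU MW in simp)
  also have "\<dots> = MW *\<^sub>v ((- 1) \<cdot>\<^sub>v w)"
    by (rule mult_mat_vec[OF MW w, symmetric])
  finally have "v = 0\<^sub>v d"
    by (rule transversal_frames_mult_vec[OF U MW UW v smult_carrier_vec[THEN iffD2, OF w]])
  then have "MU *\<^sub>v v = 0\<^sub>v (2 * d)"
    using MU by (intro eq_vecI) auto
  then have "MW *\<^sub>v w = 0\<^sub>v (2 * d)"
    using sum0 MW w by simp
  then have "w = 0\<^sub>v d" by (rule mat_frame_mult_vec_eq_0[OF W w])
  then show "x = 0\<^sub>v (2 * d)"
    using x_eq \<open>v = 0\<^sub>v d\<close> by (auto simp: mult_2)
qed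

lemma append_cols_decomposition:
  fixes AU AV AW :: "complex mat"
  assumes AU: "AU \<in> carrier_mat (2 * d) d" and AW: "AW \<in> carrier_mat (2 * d) d"
    and AV: "AV \<in> carrier_mat (2 * d) d" and "det (append_cols AU AW) \<noteq> 0"
  obtains X Y where "X \<in> carrier_mat d d" "Y \<in> carrier_mat d d" "AV = AU * X + AW * Y"
proof -
  let ?G = "append_cols AU AW"
  have G: "?G \<in> carrier_mat (2 * d) (2 * d)"
    using append_cols_carrier[OF AU AW] by (simp add: mult_2)
  obtain Gi where Gi: "Gi \<in> carrier_mat (2 * d) (2 * d)" "?G * Gi = 1\<^sub>m (2 * d)"
    using inverse_mat_exists[OF G assms(4)] by blast
  define K where "K = Gi * AV"
  have K: "K \<in> carrier_mat (d + d) d" using Gi AV by (simp add: K_def mult_2)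
  have "AV = ?G * (upper_block d K @\<^sub>r lower_block d K)"
    using Gi AV append_rows_upper_lower_block[OF K]
    by (simp add: K_def assoc_mult_mat[OF G Gi(1) AV, symmetric])
  then show ?thesis
    using that[OF upper_lower_block_carrier[OF K]]
      append_cols_mult_append_rows[OF AU AW upper_lower_block_carrier[OF K]] by simp
qed

lemma det_nonzero_of_transversal_decomposition:
  assumes V: "mat_frame (2 * d) d AV" and AU: "AU \<in> carrier_mat (2 * d) d"
    and AW: "AW \<in> carrier_mat (2 * d) d" and VW: "col_space AV \<inter> col_space AW = {\<lambda>_. 0}"
    and X: "X \<in> carrier_mat d d" and Y: "Y \<in> carrier_mat d d" and AV: "AV = AU * X + AW * Y"
  shows "det X \<noteq> 0"
proof (rule det_nonzero_if_injective[OF X])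
  fix v assume v: "v \<in> carrier_vec d" "X *\<^sub>v v = 0\<^sub>v d"
  have "AU *\<^sub>v (X *\<^sub>v v) = 0\<^sub>v (2 * d)"
    unfolding v(2) using AU by (intro eq_vecI) auto
  then have "AV *\<^sub>v v = AW *\<^sub>v (Y *\<^sub>v v)"
    using AU AW X Y v(1) by (simp add: AV add_mult_distrib_mat_vec[of _ "2 * d" d])
  then show "v = 0\<^sub>v d"
    by (rule transversal_frames_mult_vec[OF V AW VW v(1) mult_mat_vec_carrier[OF Y v(1)]])
qed

lemma adapted_frames_exist:
  assumes U: "mat_frame (2 * d) d AU" and V: "mat_frame (2 * d) d AV" and W: "mat_frame (2 * d) d AW"
    and UV: "col_space AU \<inter> col_space AV = {\<lambda>_. 0}"
    and UW: "col_space AU \<inter> col_space AW = {\<lambda>_. 0}"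
    and VW: "col_space AV \<inter> col_space AW = {\<lambda>_. 0}"
  obtains MU MW where "mat_frame (2 * d) d MU" "mat_frame (2 * d) d MW"
    "col_space MU = col_space AU" "col_space MW = col_space AW" "col_space (MU + MW) = col_space AV"
proof -
  have AU: "AU \<in> carrier_mat (2 * d) d" and AV: "AV \<in> carrier_mat (2 * d) d"
    and AW: "AW \<in> carrier_mat (2 * d) d"
    using U V W by (simp_all add: mat_frame_carrier)
  obtain X Y where X: "X \<in> carrier_mat d d" and Y: "Y \<in> carrier_mat d d"
    and AV_eq: "AV = AU * X + AW * Y"
    using append_cols_decomposition[OF AU AW AV det_append_cols_transversal[OF U W UW]] by blast
  have "AV = AW * Y + AU * X"
    using AV_eq AU AW X Y by (simp add: comm_add_mat[of _ "2 * d" d])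
  moreover have "col_space AV \<inter> col_space AU = {\<lambda>_. 0}" using UV by blast
  ultimately have dY: "det Y \<noteq> 0"
    using det_nonzero_of_transversal_decomposition[OF V AW AU _ Y X] by blast
  have dX: "det X \<noteq> 0"
    by (rule det_nonzero_of_transversal_decomposition[OF V AU AW VW X Y AV_eq])
  show ?thesis
  proof (rule that)
    show "mat_frame (2 * d) d (AU * X)" "mat_frame (2 * d) d (AW * Y)"
      by (rule mat_frame_mult[OF U X dX], rule mat_frame_mult[OF W Y dY])
    show "col_space (AU * X) = col_space AU" "col_space (AW * Y) = col_space AW"
      by (rule col_space_mult_invertible[OF AU X dX], rule col_space_mult_invertible[OF AW Y dY])
    show "col_space (AU * X + AW * Y) = col_space AV"
      by (simp add: AV_eq)
  qed
qed

locale transversal_frames =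
  fixes d :: nat and MU MW :: "complex mat"
  assumes d_pos: "1 \<le> d"
    and frame_U: "mat_frame (2 * d) d MU" and frame_W: "mat_frame (2 * d) d MW"
    and transversal: "col_space MU \<inter> col_space MW = {\<lambda>_. 0}"
begin

definition line_frame :: "complex \<Rightarrow> complex \<Rightarrow> complex mat" where
  "line_frame s t = s \<cdot>\<^sub>m MU + t \<cdot>\<^sub>m MW"

definition line :: "complex \<times> complex \<Rightarrow> cvec set" where
  "line = (\<lambda>(s, t). col_space (line_frame s t))"

definition pencil :: "complex \<Rightarrow> complex \<Rightarrow> complex mat" where
  "pencil s t = (s \<cdot>\<^sub>m 1\<^sub>m d) @\<^sub>r (t \<cdot>\<^sub>m 1\<^sub>m d)"

definition "basis = append_cols MU MW"

lemma MU_carrier: "MU \<in> carrier_mat (2 * d) d" and MW_carrier: "MW \<in> carrier_mat (2 * d) d"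
  using frame_U frame_W by (simp_all add: mat_frame_carrier)

lemma basis_carrier: "basis \<in> carrier_mat (2 * d) (2 * d)"
  using append_cols_carrier[OF MU_carrier MW_carrier] by (simp add: basis_def mult_2)

definition "basis_inv = (SOME B. B \<in> carrier_mat (2 * d) (2 * d) \<and> basis * B = 1\<^sub>m (2 * d) \<and> B * basis = 1\<^sub>m (2 * d))"

lemma basis_inv: "basis_inv \<in> carrier_mat (2 * d) (2 * d)" "basis * basis_inv = 1\<^sub>m (2 * d)" "basis_inv * basis = 1\<^sub>m (2 * d)"
proof -
  obtain B where "B \<in> carrier_mat (2 * d) (2 * d)" "basis * B = 1\<^sub>m (2 * d)" "B * basis = 1\<^sub>m (2 * d)"
    using inverse_mat_exists[OF basis_carrier det_append_cols_transversal[OF frame_U frame_W transversal, folded basis_def]]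
    by blast
  then have "\<exists>B. B \<in> carrier_mat (2 * d) (2 * d) \<and> basis * B = 1\<^sub>m (2 * d) \<and> B * basis = 1\<^sub>m (2 * d)" by blast
  from someI_ex[OF this] show "basis_inv \<in> carrier_mat (2 * d) (2 * d)" "basis * basis_inv = 1\<^sub>m (2 * d)" "basis_inv * basis = 1\<^sub>m (2 * d)"
    unfolding basis_inv_def by blast+
qed

lemma pencil_carrier: "pencil s t \<in> carrier_mat (2 * d) d"
  unfolding pencil_def using carrier_append_rows[of "s \<cdot>\<^sub>m 1\<^sub>m d" d d "t \<cdot>\<^sub>m 1\<^sub>m d" d]
  by (simp add: mult_2)

lemma line_frame_carrier: "line_frame s t \<in> carrier_mat (2 * d) d"
  using MU_carrier MW_carrier by (simp add: line_frame_def)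

lemma basis_mult_pencil: "basis * pencil s t = line_frame s t"
  unfolding basis_def pencil_def line_frame_def
  using append_cols_mult_append_rows[OF MU_carrier MW_carrier, of "s \<cdot>\<^sub>m 1\<^sub>m d" d "t \<cdot>\<^sub>m 1\<^sub>m d"]
    MU_carrier MW_carrier
  by (simp add: mult_smult_distrib[OF _ one_carrier_mat])

lemma basis_inv_mult_line_frame: "basis_inv * line_frame s t = pencil s t"
  unfolding basis_mult_pencil[symmetric]
  using basis_inv pencil_carrier basis_carrier
  by (simp add: assoc_mult_mat[of _ "2 * d" "2 * d" _ "2 * d" _ d, symmetric] left_mult_one_mat[OF pencil_carrier])

lemma pencil_mult: "T \<in> carrier_mat d d \<Longrightarrow> pencil s t * T = (s \<cdot>\<^sub>m T) @\<^sub>r (t \<cdot>\<^sub>m T)"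
  unfolding pencil_def by (simp add: append_rows_mult[of _ d d _ d])

lemma line_frame_frame:
  assumes "(s, t) \<noteq> (0, 0)"
  shows "mat_frame (2 * d) d (line_frame s t)"
proof -
  define \<sigma> where "\<sigma> = (if s \<noteq> 0 then (\<lambda>i. i) else (\<lambda>i. d + i))"
  define L where "L = rows_select d (2 * d) \<sigma> * basis_inv"
  have L: "L \<in> carrier_mat d (2 * d)" using basis_inv by (simp add: L_def)
  have "L * line_frame s t = rows_select d (2 * d) \<sigma> * pencil s t"
    using basis_inv pencil_carrier line_frame_carrier
    by (simp add: L_def assoc_mult_mat[of _ d "2 * d" _ "2 * d" _ d] basis_inv_mult_line_frame)
  also have "\<dots> = (if s \<noteq> 0 then s else t) \<cdot>\<^sub>m 1\<^sub>m d"
    using pencil_carrier[of s t]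
    by (subst rows_select_mult) (auto simp: \<sigma>_def pencil_def index_append_rows[of _ d d _ d] mult_2 intro!: eq_matI)
  finally have "det (L * line_frame s t) \<noteq> 0" using assms by auto
  moreover have "d \<le> 2 * d" by simp
  ultimately show ?thesis
    using mat_frameI_det_mult[OF line_frame_carrier L] by blast
qed

lemma line_grass_morphism: "grass_morphism (2 * d) d d line"
proof -
  have "binary_form d (\<lambda>s t. pluecker_coord d I (line_frame s t))" for I
  proof -
    let ?S = "rows_select d (2 * d) ((!) (sorted_list_of_set I))"
    have "pluecker_coord d I (line_frame s t) = det (s \<cdot>\<^sub>m (?S * MU) + t \<cdot>\<^sub>m (?S * MW))" for s t
    proof -
      have "?S * line_frame s t = ?S * (s \<cdot>\<^sub>m MU) + ?S * (t \<cdot>\<^sub>m MW)"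
        unfolding line_frame_def
        by (rule mult_add_distrib_mat[OF rows_select_carrier smult_carrier_mat[OF MU_carrier]
              smult_carrier_mat[OF MW_carrier]])
      also have "\<dots> = s \<cdot>\<^sub>m (?S * MU) + t \<cdot>\<^sub>m (?S * MW)"
        using mult_smult_distrib[OF rows_select_carrier MU_carrier] mult_smult_distrib[OF rows_select_carrier MW_carrier]
        by simp
      finally show ?thesis
        using line_frame_carrier[of s t] by (simp add: pluecker_coord_def)
    qed
    then show ?thesis
      using binary_form_det_pencil[of "?S * MU" d "?S * MW"] MU_carrier MW_carrier by simp
  qed
  then obtain P where "\<And>I s t. pluecker_coord d I (line_frame s t) = hform d (P I) s t"
    unfolding binary_form_def by metis
  then show ?thesis
    by (intro grass_morphismI[OF line_frame_frame]) (simp_all add: line_def)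
qed

lemma line_at_0: "line (1, 0) = col_space MU"
  and line_at_infinity: "line (0, 1) = col_space MW"
  and line_at_1: "line (1, 1) = col_space (MU + MW)"
  using MU_carrier MW_carrier by (auto simp: line_def line_frame_def intro!: arg_cong[of _ _ col_space] eq_matI)


lemma col_space_eq_line_iff:
  assumes M: "mat_frame (2 * d) d M" and st: "(s, t) \<noteq> (0, 0)"
  shows "col_space M = line (s, t) \<longleftrightarrow> (\<exists>T\<in>carrier_mat d d. det T \<noteq> 0 \<and>
           upper_block d (basis_inv * M) = s \<cdot>\<^sub>m T \<and> lower_block d (basis_inv * M) = t \<cdot>\<^sub>m T)"
proof
  have Mc: "M \<in> carrier_mat (2 * d) d" using M by (rule mat_frame_carrier)
  have GM: "basis_inv * M \<in> carrier_mat (d + d) d" using basis_inv(1) Mc by (simp add: mult_2)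
  assume "col_space M = line (s, t)"
  then have "col_space M \<subseteq> col_space (line_frame s t)" by (simp add: line_def)
  then obtain T where T: "T \<in> carrier_mat d d" "M = line_frame s t * T"
    using col_space_subset_imp_mult[OF Mc line_frame_carrier] by blast
  obtain I where "pluecker_coord d I M \<noteq> 0" using M by (auto simp: mat_frame_def)
  then have "det T \<noteq> 0"
    using pluecker_coord_mult[OF line_frame_carrier T(1)] T(2) by auto
  moreover have "basis_inv * M = (s \<cdot>\<^sub>m T) @\<^sub>r (t \<cdot>\<^sub>m T)"
    using basis_inv(1) T line_frame_carrier
    by (simp add: assoc_mult_mat[of _ "2 * d" "2 * d" _ d _ d, symmetric] basis_inv_mult_line_frame pencil_mult)
  ultimately show "\<exists>T\<in>carrier_mat d d. det T \<noteq> 0 \<and>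
      upper_block d (basis_inv * M) = s \<cdot>\<^sub>m T \<and> lower_block d (basis_inv * M) = t \<cdot>\<^sub>m T"
    using T(1) upper_lower_block_append_rows[of "s \<cdot>\<^sub>m T" d d "t \<cdot>\<^sub>m T" d] by auto
next
  have Mc: "M \<in> carrier_mat (2 * d) d" using M by (rule mat_frame_carrier)
  have GM: "basis_inv * M \<in> carrier_mat (d + d) d" using basis_inv(1) Mc by (simp add: mult_2)
  assume "\<exists>T\<in>carrier_mat d d. det T \<noteq> 0 \<and>
      upper_block d (basis_inv * M) = s \<cdot>\<^sub>m T \<and> lower_block d (basis_inv * M) = t \<cdot>\<^sub>m T"
  then obtain T where T: "T \<in> carrier_mat d d" "det T \<noteq> 0"
    and blocks: "upper_block d (basis_inv * M) = s \<cdot>\<^sub>m T" "lower_block d (basis_inv * M) = t \<cdot>\<^sub>m T"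
    by blast
  have "basis_inv * M = pencil s t * T"
    using append_rows_upper_lower_block[OF GM] by (simp add: blocks pencil_mult[OF T(1)])
  have "M = basis * (basis_inv * M)"
    using basis_inv(2) Mc by (simp add: assoc_mult_mat[OF basis_carrier basis_inv(1) Mc, symmetric])
  also have "\<dots> = basis * pencil s t * T"
    unfolding \<open>basis_inv * M = pencil s t * T\<close> by (rule assoc_mult_mat[OF basis_carrier pencil_carrier T(1), symmetric])
  finally have "M = line_frame s t * T" by (simp add: basis_mult_pencil)
  then show "col_space M = line (s, t)"
    using col_space_mult_invertible[OF line_frame_carrier T] by (simp add: line_def)
qed

lemma curve_in_adapted_coordinates:
  assumes M: "\<And>s t. M s t \<in> carrier_mat (2 * d) d"
    and frames: "\<And>s t. (s, t) \<noteq> (0, 0) \<Longrightarrow> mat_frame (2 * d) d (M s t)"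
    and c: "\<And>s t. (s, t) \<noteq> (0, 0) \<Longrightarrow> c s t \<noteq> 0"
    and forms: "\<And>L. L \<in> carrier_mat d (2 * d) \<Longrightarrow>
       \<exists>h. \<forall>s t. (s, t) \<noteq> (0, 0) \<longrightarrow> det (L * M s t) = c s t * hform d h s t"
    and M_0: "col_space (M 1 0) = line (1, 0)" and M_1: "col_space (M 1 1) = line (1, 1)"
    and M_infinity: "col_space (M 0 1) = line (0, 1)"
  shows "curve_through_standard_points d (\<lambda>s t. upper_block d (basis_inv * M s t))
           (\<lambda>s t. lower_block d (basis_inv * M s t)) c"
proof
  let ?X = "\<lambda>s t. upper_block d (basis_inv * M s t)" and ?Y = "\<lambda>s t. lower_block d (basis_inv * M s t)"
  have K: "basis_inv * M s t \<in> carrier_mat (d + d) d" for s t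
    using basis_inv(1) M by (simp add: mult_2)
  have on_line: "col_space (M s t) = line (s, t) \<longleftrightarrow>
      (\<exists>T\<in>carrier_mat d d. det T \<noteq> 0 \<and> ?X s t = s \<cdot>\<^sub>m T \<and> ?Y s t = t \<cdot>\<^sub>m T)"
    if "(s, t) \<noteq> (0, 0)" for s t
    by (rule col_space_eq_line_iff[OF frames[OF that] that])
  have zero_smult: "0 \<cdot>\<^sub>m T = 0\<^sub>m d d" if "T \<in> carrier_mat d d" for T :: "complex mat"
    using that by (intro eq_matI) auto
  show "1 \<le> d" by (rule d_pos)
  show "?X s t \<in> carrier_mat d d" "?Y s t \<in> carrier_mat d d" for s t
    using upper_lower_block_carrier[OF K] by simp_all
  show "c s t \<noteq> 0" if "(s, t) \<noteq> (0, 0)" for s t by (rule c[OF that])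
  show "\<exists>h. \<forall>s t. (s, t) \<noteq> (0, 0) \<longrightarrow> det (L * (?X s t @\<^sub>r ?Y s t)) = c s t * hform d h s t"
    if L: "L \<in> carrier_mat d (2 * d)" for L
  proof -
    have "L * (?X s t @\<^sub>r ?Y s t) = (L * basis_inv) * M s t" for s t
      using append_rows_upper_lower_block[OF K] L basis_inv(1) M
      by (simp add: assoc_mult_mat[of L d "2 * d" _ "2 * d" _ d])
    then show ?thesis using forms[OF mult_carrier_mat[OF L basis_inv(1)]] by simp
  qed
  obtain T where "T \<in> carrier_mat d d" "det T \<noteq> 0" "?X 1 0 = T" "?Y 1 0 = 0 \<cdot>\<^sub>m T"
    using on_line[of 1 0] M_0 by auto
  then show "?Y 1 0 = 0\<^sub>m d d" "det (?X 1 0) \<noteq> 0" by (simp_all add: zero_smult)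
  obtain T where "T \<in> carrier_mat d d" "det T \<noteq> 0" "?X 0 1 = 0 \<cdot>\<^sub>m T" "?Y 0 1 = T"
    using on_line[of 0 1] M_infinity by auto
  then show "?X 0 1 = 0\<^sub>m d d" "det (?Y 0 1) \<noteq> 0" by (simp_all add: zero_smult)
  obtain T where "det T \<noteq> 0" "?X 1 1 = T" "?Y 1 1 = T"
    using on_line[of 1 1] M_1 by auto
  then show "?X 1 1 = ?Y 1 1" "det (?X 1 1) \<noteq> 0" by simp_all
qed

theorem grass_morphism_eq_line:
  assumes f: "grass_morphism (2 * d) d d f"
    and f_0: "f (1, 0) = line (1, 0)" and f_1: "f (1, 1) = line (1, 1)"
    and f_infinity: "f (0, 1) = line (0, 1)"
    and st: "(s, t) \<noteq> (0, 0)"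
  shows "f (s, t) = line (s, t)"
proof -
  have "d \<le> 2 * d" by simp
  obtain M c where M: "\<And>s t. M s t \<in> carrier_mat (2 * d) d"
    "\<And>s t. (s, t) \<noteq> (0, 0) \<Longrightarrow> mat_frame (2 * d) d (M s t)"
    "\<And>s t. (s, t) \<noteq> (0, 0) \<Longrightarrow> f (s, t) = col_space (M s t)"
    "\<And>s t. (s, t) \<noteq> (0, 0) \<Longrightarrow> c s t \<noteq> 0"
    "\<And>L. L \<in> carrier_mat d (2 * d) \<Longrightarrow>
       \<exists>h. \<forall>s t. (s, t) \<noteq> (0, 0) \<longrightarrow> det (L * M s t) = c s t * hform d h s t"
    using grass_morphism_frames[OF f \<open>d \<le> 2 * d\<close>] by blast
  have "curve_through_standard_points d (\<lambda>s t. upper_block d (basis_inv * M s t))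
      (\<lambda>s t. lower_block d (basis_inv * M s t)) c"
    by (rule curve_in_adapted_coordinates[OF M(1,2,4,5)]) (use M(3) f_0 f_1 f_infinity in simp_all)
  from curve_through_standard_points.frame_on_standard_line[OF this st]
  show ?thesis
    using col_space_eq_line_iff[OF M(2)[OF st] st] M(3)[OF st] by simp
qed

end

theorem mainTheorem1:
  fixes d :: nat and U V W :: "cvec set"
  assumes "d \<ge> 1"
    and "grass_point (2 * d) d U" and "grass_point (2 * d) d V" and "grass_point (2 * d) d W"
    and "U \<inter> V = {\<lambda>_. 0}" and "U \<inter> W = {\<lambda>_. 0}" and "V \<inter> W = {\<lambda>_. 0}"
  shows "(\<exists>f. grass_morphism (2 * d) d d f \<and> f (1, 0) = U \<and> f (1, 1) = V \<and> f (0, 1) = W)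
       \<and> (\<forall>f g. grass_morphism (2 * d) d d f \<and> f (1, 0) = U \<and> f (1, 1) = V \<and> f (0, 1) = W
              \<and> grass_morphism (2 * d) d d g \<and> g (1, 0) = U \<and> g (1, 1) = V \<and> g (0, 1) = W
              \<longrightarrow> (\<forall>s t. (s, t) \<noteq> (0, 0) \<longrightarrow> f (s, t) = g (s, t)))"
proof -
  obtain AU where AU: "mat_frame (2 * d) d AU" "U = col_space AU"
    by (rule grass_point_mat_frame[OF assms(2)])
  obtain AV where AV: "mat_frame (2 * d) d AV" "V = col_space AV"
    by (rule grass_point_mat_frame[OF assms(3)])
  obtain AW where AW: "mat_frame (2 * d) d AW" "W = col_space AW"
    by (rule grass_point_mat_frame[OF assms(4)])
  obtain MU MW where M: "mat_frame (2 * d) d MU" "mat_frame (2 * d) d MW"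
    and spans: "col_space MU = U" "col_space MW = W" "col_space (MU + MW) = V"
    by (rule adapted_frames_exist[OF AU(1) AV(1) AW(1)]) (use assms(5-7) AU AV AW in simp_all)
  interpret transversal_frames d MU MW
    using assms(1,6) M spans by unfold_locales simp_all
  have line_values: "line (1, 0) = U" "line (1, 1) = V" "line (0, 1) = W"
    using line_at_0 line_at_1 line_at_infinity spans by simp_all
  show ?thesis
  proof (intro conjI allI impI)
    show "\<exists>f. grass_morphism (2 * d) d d f \<and> f (1, 0) = U \<and> f (1, 1) = V \<and> f (0, 1) = W"
      using line_grass_morphism line_values by blast
    fix f g :: "complex \<times> complex \<Rightarrow> cvec set" and s t :: complex
    assume "grass_morphism (2 * d) d d f \<and> f (1, 0) = U \<and> f (1, 1) = V \<and> f (0, 1) = W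
      \<and> grass_morphism (2 * d) d d g \<and> g (1, 0) = U \<and> g (1, 1) = V \<and> g (0, 1) = W"
      and "(s, t) \<noteq> (0, 0)"
    then show "f (s, t) = g (s, t)"
      using grass_morphism_eq_line[of f s t] grass_morphism_eq_line[of g s t] line_values by simp
  qed
qed

end
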